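(* Let $d\in\mathbb{N}$. For every symmetric quasi-Banach function space $E$ on $\mathbb{R}^d$, there exists $f\in E(\mathbb{R}^d)$ such that the inequality $$\Big\|(1-\Delta_{\mathbb{R}^d})^{-\frac{d}{4}}M_f(1-\Delta_{\mathbb{R}^d})^{-\frac{d}{4}}\Big\|_{1,\infty}\leq \|f\|_E$$ fails.
   Context: $\Delta_{\mathbb{R}^d}$ is the Laplace operator on $L_2(\mathbb{R}^d)$ and $M_f$ is multiplication by $f$. $S(\mathbb{R}^d)$ denotes the set of Lebesgue measurable functions $f$ on $\mathbb{R}^d$ such that, for some $n\in\mathbb{N}$, $|f|\chi_{\{|f|>n\}}$ is supported on a set of finite measure; $\mu(f)$ denotes the decreasing rearrangement of $|f|$. A symmetric quasi-Banach function space is a subspace $E(\mathbb{R}^d)\subset S(\mathbb{R}^d)$ with a complete quasi-norm $\|\cdot\|_E$ such that (1) if $f\in E$, $g\in S(\mathbb{R}^d)$ and $|g|\le|f|$, then $g\in E$ and $\|g\|_E\le\|f\|_E$; (2) if $f\in E$, $g\in S(\mathbb{R}^d)$ and $\mu(g)=\mu(f)$, then $g\in E$ and $\|g\|_E=\|f\|_E$. For a compact operator $T$, $\mu(k,T)=\inf\{\|T-R\|_\infty:\mathrm{rank}(R)\le k\}$ and $\|T\|_{1,\infty}=\sup_{k\ge0}(k+1)\mu(k,T)$ (equal to $+\infty$ if $T$ is not in $\mathcal{L}_{1,\infty}$). *)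

theory Defs
  imports "HOL-Analysis.Analysis"
begin

type_synonym 'n fn = "real^'n \<Rightarrow> complex"

section \<open>The Hilbert space L2(R^d), d = CARD('n)\<close>

definition l2 :: "'n::finite fn set" where
  "l2 = {g. g \<in> borel_measurable lebesgue \<and> integrable lebesgue (\<lambda>x. (cmod (g x))^2)}"

definition l2_inner :: "'n::finite fn \<Rightarrow> 'n fn \<Rightarrow> complex" where
  "l2_inner g h = (\<integral>x. g x * cnj (h x) \<partial>lebesgue)"

definition l2_norm :: "'n::finite fn \<Rightarrow> real" where
  "l2_norm g = sqrt (\<integral>x. (cmod (g x))^2 \<partial>lebesgue)"

definition heat_kernel :: "real \<Rightarrow> real^'n::finite \<Rightarrow> real" where
  "heat_kernel t x = (4 * pi * t) powr (- real CARD('n) / 2) * exp (- ((norm x) ^ 2) / (4 * t))"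

text \<open>Kernel of (1 - Laplacian)^(-a) = 1/Gamma(a) * int_0^infty t^(a-1) e^(-t) exp(t Laplacian) dt.\<close>
definition bessel_kernel :: "real \<Rightarrow> real^'n::finite \<Rightarrow> real" where
  "bessel_kernel a x = (1 / Gamma a) *
     (\<integral>t. (if 0 < t then exp (- t) * heat_kernel t x * t powr (a - 1) else 0) \<partial>lborel)"

text \<open>The operator (1 - Laplacian)^(-a), acting by convolution with the Bessel kernel.\<close>
definition bessel_pot :: "real \<Rightarrow> 'n::finite fn \<Rightarrow> 'n fn" where
  "bessel_pot a g = (\<lambda>x. \<integral>y. complex_of_real (bessel_kernel a (x - y)) * g y \<partial>lebesgue)"

text \<open>Sesquilinear form of T_f: <T_f g, h> = int f (A g) conj (A h), A = (1-Laplacian)^(-d/4).\<close>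
definition sandwich_form :: "'n::finite fn \<Rightarrow> 'n fn \<Rightarrow> 'n fn \<Rightarrow> complex" where
  "sandwich_form f g h =
     (\<integral>x. f x * bessel_pot (real CARD('n) / 4) g x * cnj (bessel_pot (real CARD('n) / 4) h x) \<partial>lebesgue)"

text \<open>Operator norm of T_f - R, where R g = sum_{i<k} <g, u i> v i is a generic operator of rank
  at most k.  If the form of T_f is not defined on L2 x L2, T_f is not a bounded operator and the
  distance is +infinity.\<close>
definition sandwich_dist :: "'n::finite fn \<Rightarrow> (nat \<Rightarrow> 'n fn) \<Rightarrow> (nat \<Rightarrow> 'n fn) \<Rightarrow> nat \<Rightarrow> ennreal" where
  "sandwich_dist f u v k =
    (if (\<forall>g\<in>l2. \<forall>h\<in>l2. integrable lebesgue
           (\<lambda>x. f x * bessel_pot (real CARD('n) / 4) g x * cnj (bessel_pot (real CARD('n) / 4) h x)))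
     then (SUP gh \<in> {(g, h). g \<in> l2 \<and> h \<in> l2 \<and> l2_norm g \<le> 1 \<and> l2_norm h \<le> 1}.
             ennreal (cmod (sandwich_form f (fst gh) (snd gh)
                - (\<Sum>i<k. l2_inner (fst gh) (u i) * l2_inner (v i) (snd gh)))))
     else \<infinity>)"

text \<open>Singular values mu(k, T_f) = inf { ||T_f - R|| : rank R \<le> k }.\<close>
definition sandwich_sing_val :: "'n::finite fn \<Rightarrow> nat \<Rightarrow> ennreal" where
  "sandwich_sing_val f k =
     (INF uv \<in> {(u, v). \<forall>i<k. u i \<in> l2 \<and> v i \<in> l2}. sandwich_dist f (fst uv) (snd uv) k)"

text \<open>||T_f||_{1,infty} = sup_k (k+1) mu(k, T_f)  (possibly +infinity).\<close>
definition sandwich_weak_norm :: "'n::finite fn \<Rightarrow> ennreal" where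
  "sandwich_weak_norm f = (SUP k. of_nat (k + 1) * sandwich_sing_val f k)"

definition S_space :: "'n::finite fn set" where
  "S_space = {f. f \<in> borel_measurable lebesgue \<and>
      (\<exists>n::nat. emeasure lebesgue {x. real n < cmod (f x)} < \<infinity>)}"

definition rearr :: "'n::finite fn \<Rightarrow> real \<Rightarrow> real" where
  "rearr f t = Inf {s. 0 \<le> s \<and> emeasure lebesgue {x. s < cmod (f x)} \<le> ennreal t}"

definition sym_qBfs :: "'n::finite fn set \<Rightarrow> ('n fn \<Rightarrow> real) \<Rightarrow> bool" where
  "sym_qBfs E N \<longleftrightarrow>
     E \<subseteq> S_space \<and>
     (\<lambda>x. 0) \<in> E \<and>
     (\<forall>f\<in>E. \<forall>g\<in>E. (\<lambda>x. f x + g x) \<in> E) \<and>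
     (\<forall>c. \<forall>f\<in>E. (\<lambda>x. c * f x) \<in> E) \<and>
     (\<forall>f\<in>E. 0 \<le> N f) \<and>
     (\<forall>f\<in>E. N f = 0 \<longleftrightarrow> (AE x in lebesgue. f x = 0)) \<and>
     (\<forall>c. \<forall>f\<in>E. N (\<lambda>x. c * f x) = cmod c * N f) \<and>
     (\<exists>C\<ge>1. \<forall>f\<in>E. \<forall>g\<in>E. N (\<lambda>x. f x + g x) \<le> C * (N f + N g)) \<and>
     (\<forall>X :: nat \<Rightarrow> 'n fn. (\<forall>n. X n \<in> E) \<and>
         (\<forall>e>0. \<exists>M. \<forall>m\<ge>M. \<forall>n\<ge>M. N (\<lambda>x. X m x - X n x) < e)
         \<longrightarrow> (\<exists>Z\<in>E. (\<lambda>n. N (\<lambda>x. X n x - Z x)) \<longlonglongrightarrow> 0)) \<and>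
     (\<forall>f\<in>E. \<forall>g\<in>S_space. (\<forall>x. cmod (g x) \<le> cmod (f x)) \<longrightarrow> g \<in> E \<and> N g \<le> N f) \<and>
     (\<forall>f\<in>E. \<forall>g\<in>S_space. (\<forall>t>0. rearr g t = rearr f t) \<longrightarrow> g \<in> E \<and> N g = N f)"

end

theory Submission
  imports Defs
begin

text \<open>
  By the lattice property, a non-null \<open>f \<in> E\<close> dominates some \<open>\<epsilon> \<chi>\<^sub>A\<close> with \<open>0 < |A| < \<infinity>\<close>, and by
  symmetry every \<open>\<epsilon> \<chi>\<^sub>S\<close> with \<open>|S| = |A|\<close> lies in \<open>E\<close> with the same quasi-norm. So it suffices to
  make \<open>\<parallel>T\<^sub>\<epsilon>\<^sub>\<chi>\<^sub>S\<parallel>\<^sub>1\<^sub>,\<^sub>\<infinity>\<close> arbitrarily large among sets of fixed measure. Take \<open>S\<close> to be \<open>k + 1\<close>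
  far apart balls of radius \<open>r\<close> around centres \<open>p\<^sub>i\<close>. Around each centre put the bump
  \<open>\<phi> = \<Sum>\<^sub>j\<^sub>\<le>\<^sub>J \<chi>\<^sub>A\<^sub>j / |A\<^sub>j|\<^sup>1\<^sup>/\<^sup>2\<close> built from the dyadic annuli \<open>A\<^sub>j\<close>: then \<open>\<parallel>\<phi>\<parallel>\<^sub>2\<^sup>2 = J\<close>, while, the
  kernel \<open>G\<close> of \<open>(1 - \<Delta>)\<^sup>-\<^sup>d\<^sup>/\<^sup>4\<close> being of size \<open>|z|\<^sup>-\<^sup>d\<^sup>/\<^sup>2\<close> near \<open>0\<close>, every annulus contributes the
  same amount to \<open>G * \<phi>\<close> near the centre, so \<open>G * \<phi> \<ge> c J\<close> there. If the balls are far enough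
  apart, the bumps do not interact, and \<open>\<langle>T g, g\<rangle> \<ge> \<epsilon> |S| c\<^sup>2 J / (4 (k + 1))\<close> for every unit
  vector \<open>g\<close> in their \<open>(k + 1)\<close>-dimensional span. Hence \<open>(k + 1) \<mu>(k, T) \<ge> \<epsilon> |S| c\<^sup>2 J / 4\<close>,
  which is unbounded in \<open>J\<close>.
\<close>

lemma powr_times_exp_neg_le:
  fixes u s p :: real
  assumes "0 < u" "0 < s" "0 < p"
  shows "u powr p * exp (- (s * u)) \<le> (p / (s * exp 1)) powr p"
proof -
  have "s * u / p \<le> exp (s * u / p - 1)"
    using exp_ge_add_one_self[of "s * u / p - 1"] by simp
  hence "(s * u / p) powr p \<le> exp (s * u / p - 1) powr p"
    using assms by (intro powr_mono2) auto
  also have "\<dots> = exp (s * u - p)"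
    using assms by (simp add: powr_def field_simps)
  finally have "(s / p) powr p * u powr p \<le> exp (s * u) * exp (- p)"
    using assms by (simp add: powr_mult[symmetric] exp_diff exp_minus field_simps)
  hence "u powr p * exp (- (s * u)) \<le> exp (- p) / (s / p) powr p"
    using assms by (simp add: field_simps exp_minus)
  also have "\<dots> = (p / (s * exp 1)) powr p"
  proof -
    have "exp 1 powr p = exp p" by (simp add: powr_def)
    thus ?thesis
      using assms by (simp add: powr_divide powr_mult exp_minus field_simps)
  qed
  finally show ?thesis .
qed

lemma powr_div_2_le_doubling:
  fixes s t b :: real
  assumes "0 < s" "s \<le> t" "t \<le> 2 * s" "- 1 \<le> b"
  shows "s powr b / 2 \<le> t powr b"
proof (cases "0 \<le> b")
  case True
  hence "s powr b \<le> t powr b"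
    using assms by (intro powr_mono2) auto
  thus ?thesis using powr_ge_zero[of s b] by linarith
next
  case False
  have half: "1 / 2 \<le> (2::real) powr b"
    using assms(4) powr_mono[of "- 1" b "2::real"] by (simp add: powr_minus)
  have "s powr b / 2 \<le> 2 powr b * s powr b"
    using mult_right_mono[OF half powr_ge_zero[of s b]] by simp
  also have "\<dots> = (2 * s) powr b"
    by (simp add: powr_mult)
  also have "\<dots> \<le> t powr b"
    using False assms by (intro powr_mono2') auto
  finally show ?thesis .
qed

lemma half_square_minus_square_le:
  fixes a b z :: real
  assumes "0 \<le> a" "0 \<le> b" "a - b \<le> z" "0 \<le> z"
  shows "a\<^sup>2 / 2 - b\<^sup>2 \<le> z\<^sup>2"
proof (cases "b \<le> a")
  case True
  hence "(a - b)\<^sup>2 \<le> z\<^sup>2" using assms by (intro power_mono) auto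
  moreover have "a\<^sup>2 / 2 - b\<^sup>2 \<le> (a - b)\<^sup>2"
    using zero_le_power2[of "a / 2 - b"] by (simp add: power2_eq_square algebra_simps)
  ultimately show ?thesis by linarith
next
  case False
  hence "a\<^sup>2 \<le> b\<^sup>2" using assms by (intro power_mono) auto
  thus ?thesis using zero_le_power2[of z] zero_le_power2[of a] by linarith
qed

lemma sum_half_squares_minus_square_ge:
  fixes c :: "nat \<Rightarrow> complex" and C d :: real
  assumes "1 \<le> J" "(\<Sum>i\<le>k. (cmod (c i))\<^sup>2) = 1 / real J"
    and "0 \<le> d" "d \<le> real J * C / (2 * (real k + 1))"
  shows "real J * C\<^sup>2 / 4 \<le> (\<Sum>i\<le>k. (cmod (c i) * (real J * C))\<^sup>2 / 2 - (d * (\<Sum>l\<le>k. cmod (c l)))\<^sup>2)"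
proof -
  have J: "0 < real J" using assms(1) by simp
  have "(\<Sum>i\<le>k. (cmod (c i) * (real J * C))\<^sup>2 / 2) = (real J * C)\<^sup>2 / 2 * (\<Sum>i\<le>k. (cmod (c i))\<^sup>2)"
    by (simp add: sum_distrib_left power_mult_distrib mult_ac)
  also have "\<dots> = real J * C\<^sup>2 / 2"
    using J unfolding assms(2) by (simp add: power2_eq_square)
  finally have main: "(\<Sum>i\<le>k. (cmod (c i) * (real J * C))\<^sup>2 / 2) = real J * C\<^sup>2 / 2" .
  have "(\<Sum>l\<le>k. cmod (c l))\<^sup>2 \<le> (real k + 1) / real J"
    using sum_squared_le_sum_of_squares[of "\<lambda>l. cmod (c l)" "{..k}"] unfolding assms(2) by (simp add: field_simps)
  moreover have "d\<^sup>2 \<le> (real J * C / (2 * (real k + 1)))\<^sup>2"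
    using assms(3,4) by (intro power_mono) auto
  ultimately have "(real k + 1) * (d\<^sup>2 * (\<Sum>l\<le>k. cmod (c l))\<^sup>2)
      \<le> (real k + 1) * ((real J * C / (2 * (real k + 1)))\<^sup>2 * ((real k + 1) / real J))"
    by (intro mult_left_mono mult_mono) auto
  also have "\<dots> = real J * C\<^sup>2 / 4"
  proof -
    have K: "K * ((real J * C / (2 * K))\<^sup>2 * (K / real J)) = real J * C\<^sup>2 / 4" if "0 < K" for K :: real
      using J that by (simp add: power2_eq_square field_simps)
    show ?thesis by (rule K) simp
  qed
  finally have "(\<Sum>i\<le>k. (d * (\<Sum>l\<le>k. cmod (c l)))\<^sup>2) \<le> real J * C\<^sup>2 / 4"
    by (simp add: power_mult_distrib add.commute)
  thus ?thesis
    unfolding sum_subtractf main by simp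
qed

lemma norm_sum_dominant_term:
  fixes c :: "nat \<Rightarrow> complex" and P :: "nat \<Rightarrow> real"
  assumes "i \<le> k" "0 \<le> L" "L \<le> P i" "P i \<le> M"
    and small: "\<And>l. l \<noteq> i \<Longrightarrow> 0 \<le> P l \<and> P l \<le> \<delta>"
  shows "cmod (c i) * L - \<delta> * (\<Sum>l\<le>k. cmod (c l)) \<le> cmod (\<Sum>l\<le>k. c l * complex_of_real (P l))"
    and "cmod (\<Sum>l\<le>k. c l * complex_of_real (P l)) \<le> (M + \<delta>) * (\<Sum>l\<le>k. cmod (c l))"
proof -
  have "0 \<le> \<delta>" using small[of "Suc i"] by simp
  have split: "(\<Sum>l\<le>k. c l * complex_of_real (P l))
      = c i * complex_of_real (P i) + (\<Sum>l\<in>{..k} - {i}. c l * complex_of_real (P l))"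
    using assms(1) by (simp add: sum.remove)
  have "cmod (\<Sum>l\<in>{..k} - {i}. c l * complex_of_real (P l)) \<le> (\<Sum>l\<in>{..k} - {i}. cmod (c l) * \<delta>)"
    using small by (intro order_trans[OF norm_sum] sum_mono) (auto simp: norm_mult intro!: mult_left_mono)
  also have "\<dots> \<le> (\<Sum>l\<le>k. cmod (c l) * \<delta>)"
    using \<open>0 \<le> \<delta>\<close> by (intro sum_mono2) auto
  finally have rest: "cmod (\<Sum>l\<in>{..k} - {i}. c l * complex_of_real (P l)) \<le> \<delta> * (\<Sum>l\<le>k. cmod (c l))"
    by (simp add: sum_distrib_left mult_ac)
  have main: "cmod (c i) * L \<le> cmod (c i * complex_of_real (P i))"
    using assms(2,3) by (simp add: norm_mult mult_left_mono)
  show "cmod (c i) * L - \<delta> * (\<Sum>l\<le>k. cmod (c l)) \<le> cmod (\<Sum>l\<le>k. c l * complex_of_real (P l))"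
    using norm_diff_ineq[of "c i * complex_of_real (P i)" "\<Sum>l\<in>{..k} - {i}. c l * complex_of_real (P l)"]
      main rest unfolding split by linarith
  have "cmod (c l * complex_of_real (P l)) \<le> cmod (c l) * (M + \<delta>)" if "l \<le> k" for l
  proof -
    have "\<bar>P l\<bar> \<le> M + \<delta>"
      using small[of l] assms(2-4) \<open>0 \<le> \<delta>\<close> by (cases "l = i") auto
    thus ?thesis by (simp add: norm_mult mult_left_mono)
  qed
  hence "cmod (\<Sum>l\<le>k. c l * complex_of_real (P l)) \<le> (\<Sum>l\<le>k. cmod (c l) * (M + \<delta>))"
    by (intro order_trans[OF norm_sum] sum_mono) auto
  thus "cmod (\<Sum>l\<le>k. c l * complex_of_real (P l)) \<le> (M + \<delta>) * (\<Sum>l\<le>k. cmod (c l))"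
    by (simp add: sum_distrib_left mult_ac)
qed

lemma obtain_nat_mult_gt:
  fixes b K :: real
  assumes "0 < b"
  obtains J :: nat where "1 \<le> J" "K < real J * b"
proof -
  obtain n :: nat where "K / b < real n" using reals_Archimedean2 by blast
  hence "K < real (max n 1) * b"
    using assms by (smt (verit) divide_less_eq le_max_iff_disj mult_right_mono of_nat_le_iff)
  thus ?thesis by (intro that[of "max n 1"]) auto
qed

lemma sum_eliminate_pivot:
  fixes a :: "'i \<Rightarrow> nat \<Rightarrow> 'a::field"
  assumes "finite I" "p \<in> I" "a p k \<noteq> 0"
  shows "(\<Sum>i\<in>I. (d(p := - (\<Sum>i\<in>I - {p}. d i * a i k) / a p k)) i * a i j)
       = (\<Sum>i\<in>I - {p}. d i * (a i j - a i k / a p k * a p j))"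
proof -
  have "(\<Sum>i\<in>I. (d(p := - (\<Sum>i\<in>I - {p}. d i * a i k) / a p k)) i * a i j)
      = - (\<Sum>i\<in>I - {p}. d i * a i k) / a p k * a p j + (\<Sum>i\<in>I - {p}. d i * a i j)"
    using assms by (simp add: sum.remove)
  thus ?thesis
    by (simp add: algebra_simps sum_subtractf sum_distrib_left sum_divide_distrib sum_distrib_right)
qed

lemma homogeneous_system_nontrivial_solution:
  fixes a :: "'i \<Rightarrow> nat \<Rightarrow> 'a::field"
  assumes "finite I" "k < card I"
  shows "\<exists>c. (\<exists>i\<in>I. c i \<noteq> 0) \<and> (\<forall>j<k. (\<Sum>i\<in>I. c i * a i j) = 0)"
  using assms
proof (induction k arbitrary: I a)
  case 0
  then obtain i where "i \<in> I" by (metis card.empty ex_in_conv less_irrefl)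
  thus ?case by (intro exI[of _ "\<lambda>_. 1"]) auto
next
  case (Suc k)
  show ?case
  proof (cases "\<forall>i\<in>I. a i k = 0")
    case True
    obtain c where c: "\<exists>i\<in>I. c i \<noteq> 0" "\<forall>j<k. (\<Sum>i\<in>I. c i * a i j) = 0"
      using Suc.IH[of I a] Suc.prems by auto
    have "(\<Sum>i\<in>I. c i * a i j) = 0" if "j < Suc k" for j
      using that c(2) True by (cases "j = k") auto
    with c(1) show ?thesis by blast
  next
    case False
    then obtain p where p: "p \<in> I" "a p k \<noteq> 0" by blast
    have "finite (I - {p})" "k < card (I - {p})"
      using Suc.prems p by auto
    then obtain d where d: "\<exists>i\<in>I - {p}. d i \<noteq> 0"
      and sol: "\<forall>j<k. (\<Sum>i\<in>I - {p}. d i * (a i j - a i k / a p k * a p j)) = 0"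
      using Suc.IH[of "I - {p}" "\<lambda>i j. a i j - a i k / a p k * a p j"] by blast
    define c where "c = d(p := - (\<Sum>i\<in>I - {p}. d i * a i k) / a p k)"
    have "(\<Sum>i\<in>I. c i * a i j) = 0" if "j < Suc k" for j
    proof (cases "j = k")
      case True
      show ?thesis
        unfolding c_def sum_eliminate_pivot[where a=a, OF Suc.prems(1) p] True using p(2) by simp
    next
      case False
      show ?thesis
        unfolding c_def sum_eliminate_pivot[where a=a, OF Suc.prems(1) p] using False that sol by simp
    qed
    moreover have "\<exists>i\<in>I. c i \<noteq> 0"
      using d by (auto simp: c_def)
    ultimately show ?thesis by blast
  qed
qed

lemma integrable_indicator_bounded:
  fixes f :: "'a \<Rightarrow> real"
  assumes "S \<in> sets M" "emeasure M S < \<infinity>" "f \<in> borel_measurable M" "\<And>x. x \<in> S \<Longrightarrow> \<bar>f x\<bar> \<le> B"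
  shows "integrable M (\<lambda>x. indicator S x * f x)"
proof (rule Bochner_Integration.integrable_bound)
  show "integrable M (\<lambda>x. indicator S x * B)"
    using assms(1,2) by (intro integrable_mult_left integrable_real_indicator)
  show "AE x in M. norm (indicator S x * f x) \<le> norm (indicator S x * B)"
    using assms(4) by (auto simp: indicator_def intro: order_trans[OF _ abs_ge_self])
qed (use assms(1,3) in measurable)

lemma integral_indicator_disjoint_union_ge:
  fixes f :: "'a \<Rightarrow> real" and A :: "nat \<Rightarrow> 'a set"
  assumes "disjoint_family_on A {..k}" "\<And>i. i \<le> k \<Longrightarrow> A i \<in> sets M"
    and "\<And>i. i \<le> k \<Longrightarrow> emeasure M (A i) < \<infinity>"
    and "integrable M (\<lambda>x. indicator (\<Union>i\<le>k. A i) x * f x)"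
    and "\<And>i x. i \<le> k \<Longrightarrow> x \<in> A i \<Longrightarrow> L i \<le> f x"
  shows "(\<Sum>i\<le>k. measure M (A i) * L i) \<le> (\<integral>x. indicator (\<Union>i\<le>k. A i) x * f x \<partial>M)"
proof -
  have int: "integrable M (\<lambda>x. indicator (A i) x * L i)" if "i \<le> k" for i
    using assms(2,3) that by (intro integrable_mult_left integrable_real_indicator) auto
  have "(\<Sum>i\<le>k. measure M (A i) * L i) = (\<integral>x. (\<Sum>i\<le>k. indicator (A i) x * L i) \<partial>M)"
    using int assms(2) by (subst Bochner_Integration.integral_sum) auto
  also have "\<dots> \<le> (\<integral>x. indicator (\<Union>i\<le>k. A i) x * f x \<partial>M)"
  proof (intro integral_mono Bochner_Integration.integrable_sum int assms(4))
    fix x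
    show "(\<Sum>i\<le>k. indicator (A i) x * L i) \<le> indicator (\<Union>i\<le>k. A i) x * f x"
    proof (cases "\<exists>i\<le>k. x \<in> A i")
      case True
      then obtain i where i: "i \<le> k" "x \<in> A i" by blast
      have "x \<notin> A l" if "l \<le> k" "l \<noteq> i" for l
        using assms(1) i that unfolding disjoint_family_on_def by blast
      hence "(\<Sum>l\<le>k. indicator (A l) x * L l) = L i"
        using i by (subst sum.remove[of _ i]) auto
      moreover have "x \<in> (\<Union>i\<le>k. A i)" using i by blast
      ultimately show ?thesis using assms(5)[OF i] by simp
    qed auto
  qed auto
  finally show ?thesis .
qed

lemma borel_measurable_cnj [measurable]:
  fixes f :: "'a \<Rightarrow> complex"
  shows "f \<in> borel_measurable M \<Longrightarrow> (\<lambda>x. cnj (f x)) \<in> borel_measurable M"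
  by (rule borel_measurable_continuous_on[where f = cnj]) (auto intro: continuous_on_cnj continuous_on_id)

lemma integrable_mult_cnj_l2:
  assumes "f \<in> l2" "g \<in> l2"
  shows "integrable lebesgue (\<lambda>y. f y * cnj (g y))"
proof (rule Bochner_Integration.integrable_bound)
  show "integrable lebesgue (\<lambda>y. (cmod (f y))\<^sup>2 + (cmod (g y))\<^sup>2)"
    using assms unfolding l2_def by auto
  show "(\<lambda>y. f y * cnj (g y)) \<in> borel_measurable lebesgue"
    using assms unfolding l2_def by auto
  have "cmod (f y) * cmod (g y) \<le> (cmod (f y))\<^sup>2 + (cmod (g y))\<^sup>2" for y
    using sum_squares_bound[of "cmod (f y)" "cmod (g y)"] mult_nonneg_nonneg[OF norm_ge_zero norm_ge_zero, of "f y" "g y"]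
    unfolding power2_eq_square by linarith
  thus "AE y in lebesgue. norm (f y * cnj (g y)) \<le> norm ((cmod (f y))\<^sup>2 + (cmod (g y))\<^sup>2)"
    by (simp add: norm_mult)
qed

lemma exists_separated_points: "\<exists>p :: nat \<Rightarrow> real^'n::finite. \<forall>i l. i \<noteq> l \<longrightarrow> R \<le> dist (p i) (p l)" if "0 \<le> R"
proof -
  define e :: "real^'n" where "e = axis undefined 1"
  have "R \<le> dist ((real i * R) *\<^sub>R e) ((real l * R) *\<^sub>R e)" if "i \<noteq> l" for i l
  proof -
    have "1 \<le> \<bar>real i - real l\<bar>" using that by linarith
    hence "R \<le> \<bar>real i - real l\<bar> * R" using \<open>0 \<le> R\<close> by (simp add: mult_le_cancel_right1)
    thus ?thesis
      by (simp add: dist_norm e_def flip: scaleR_diff_left left_diff_distrib)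
  qed
  thus ?thesis
    by (intro exI[of _ "\<lambda>i. (real i * R) *\<^sub>R e"]) simp
qed

lemma separated_cballs_disjoint:
  assumes "\<And>i l. i \<noteq> l \<Longrightarrow> R \<le> dist (p i) (p l)" "2 * r < R"
  shows "disjoint_family_on (\<lambda>i. cball (p i) r) A"
  unfolding disjoint_family_on_def
proof (intro ballI impI equals0I)
  fix i l x
  assume "i \<noteq> l" "x \<in> cball (p i) r \<inter> cball (p l) r"
  hence "dist (p i) (p l) \<le> 2 * r"
    using dist_triangle3[of "p i" "p l" x] by (auto simp: dist_commute)
  thus False
    using assms(1)[OF \<open>i \<noteq> l\<close>] assms(2) by linarith
qed

lemma emeasure_separated_cballs:
  fixes p :: "nat \<Rightarrow> real^'n::finite"
  assumes "\<And>i l. i \<noteq> l \<Longrightarrow> R \<le> dist (p i) (p l)" "2 * r < R" "0 \<le> r"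
  shows "emeasure lebesgue (\<Union>i\<le>k. cball (p i) r)
       = ennreal (real (k + 1) * (unit_ball_vol (real CARD('n)) * r ^ CARD('n)))"
proof -
  have "emeasure lebesgue (\<Union>i\<le>k. cball (p i) r) = (\<Sum>i\<le>k. emeasure lebesgue (cball (p i) r))"
    using separated_cballs_disjoint[OF assms(1,2)] by (intro sum_emeasure[symmetric]) auto
  also have "\<dots> = (\<Sum>i\<le>k. ennreal (unit_ball_vol (real CARD('n)) * r ^ CARD('n)))"
    using assms(3) by (simp add: emeasure_cball)
  finally show ?thesis
    using assms(3) by (simp add: ennreal_of_nat_eq_real_of_nat ennreal_mult' add.commute)
qed

lemma obtain_balls_of_total_volume:
  fixes a V \<rho> :: real
  assumes "0 < a" "0 < V" "0 < \<rho>" "0 < d"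
  obtains k :: nat and r where "0 < r" "r \<le> \<rho>" "real (k + 1) * (V * r ^ d) = a"
proof -
  obtain k :: nat where "a / (V * \<rho> ^ d) < real k" using reals_Archimedean2 by blast
  hence "a < real k * (V * \<rho> ^ d)"
    using assms by (simp add: divide_less_eq)
  also have "\<dots> \<le> real (k + 1) * (V * \<rho> ^ d)"
    using assms by (intro mult_right_mono) auto
  finally have a_le: "a \<le> real (k + 1) * V * \<rho> ^ d" by (simp add: mult.assoc)
  define r where "r = (a / (real (k + 1) * V)) powr (1 / real d)"
  have "0 < r" using assms by (simp add: r_def)
  have "r ^ d = a / (real (k + 1) * V)"
    using assms unfolding r_def by (simp add: powr_powr flip: powr_realpow)
  hence vol: "real (k + 1) * (V * r ^ d) = a"
    using assms by simp
  hence "real (k + 1) * V * r ^ d \<le> real (k + 1) * V * \<rho> ^ d"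
    using a_le by (simp add: mult.assoc)
  hence "r ^ d \<le> \<rho> ^ d"
    using assms by (simp add: mult.assoc)
  hence "r \<le> \<rho>"
    using \<open>0 < r\<close> assms by simp
  show ?thesis
    using \<open>0 < r\<close> \<open>r \<le> \<rho>\<close> vol by (rule that)
qed

section \<open>The Bessel kernel\<close>

definition bessel_integrand :: "real \<Rightarrow> real^'n::finite \<Rightarrow> real \<Rightarrow> real" where
  "bessel_integrand a z t = (if 0 < t then exp (- t) * heat_kernel t z * t powr (a - 1) else 0)"

lemma bessel_kernel_eq_integral:
  "bessel_kernel a z = integral\<^sup>L lborel (bessel_integrand a z) / Gamma a"
  unfolding bessel_kernel_def bessel_integrand_def by simp

lemma bessel_integrand_measurable [measurable]: "bessel_integrand a z \<in> borel_measurable borel"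
  unfolding bessel_integrand_def heat_kernel_def by measurable

lemma bessel_integrand_nonneg: "0 \<le> bessel_integrand a z t"
  unfolding bessel_integrand_def heat_kernel_def by auto

lemma bessel_kernel_measurable [measurable]: "bessel_kernel a \<in> borel_measurable borel"
  unfolding bessel_kernel_def heat_kernel_def by measurable

lemma bessel_kernel_nonneg: "0 < a \<Longrightarrow> 0 \<le> bessel_kernel a z"
  unfolding bessel_kernel_eq_integral
  by (intro divide_nonneg_pos integral_nonneg_AE Gamma_real_pos) (auto simp: bessel_integrand_nonneg)

lemma integrable_exp_neg_nonneg_reals:
  "integrable lborel (\<lambda>t::real. indicator {0..} t * exp (- t))"
proof -
  have "set_integrable lebesgue {0..} (\<lambda>t::real. exp (- 1 * t))"
    by (intro nonnegative_absolutely_integrable_1 integrable_on_exp_minus_to_infinity) auto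
  hence "integrable lebesgue (\<lambda>t::real. indicator {0..} t * exp (- t))"
    unfolding set_integrable_def by simp
  thus ?thesis
    by (subst integrable_completion[symmetric]) auto
qed

text \<open>For \<open>t > 0\<close> the integrand is \<open>e\<^sup>-\<^sup>t (4\<pi>)\<^sup>-\<^sup>d\<^sup>/\<^sup>2 t\<^sup>-\<^sup>p exp (- |z|\<^sup>2 / (4 t))\<close> with \<open>p = d/2 + 1 - a\<close>, and
  \<open>t\<^sup>-\<^sup>p exp (- |z|\<^sup>2 / (4 t))\<close> is maximal at \<open>t = |z|\<^sup>2 / (4 p)\<close>.\<close>
lemma bessel_integrand_le:
  fixes z :: "real^'n::finite"
  assumes "z \<noteq> 0" and p: "p = real CARD('n) / 2 + 1 - a" "0 < p"
  shows "bessel_integrand a z t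
    \<le> (4 * pi) powr (- real CARD('n) / 2) * (4 * p / exp 1) powr p * norm z powr (- 2 * p)
       * (indicator {0..} t * exp (- t))"
proof (cases "0 < t")
  case True
  define s where "s = (norm z)\<^sup>2 / 4"
  have s: "0 < s" using assms by (simp add: s_def)
  have "t powr (- real CARD('n) / 2) * t powr (a - 1) = t powr (- p)"
    unfolding p(1) by (simp add: algebra_simps flip: powr_add)
  also have "\<dots> = (1 / t) powr p"
    using True by (simp add: powr_minus_divide powr_divide)
  finally have tp: "t powr (- real CARD('n) / 2) * t powr (a - 1) = (1 / t) powr p" .
  have "heat_kernel t z * t powr (a - 1)
      = (4 * pi) powr (- real CARD('n) / 2) * (t powr (- real CARD('n) / 2) * t powr (a - 1))
        * exp (- (s * (1 / t)))"
    using True unfolding heat_kernel_def s_def by (simp add: powr_mult mult_ac)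
  also have "\<dots> = (4 * pi) powr (- real CARD('n) / 2) * ((1 / t) powr p * exp (- (s * (1 / t))))"
    unfolding tp by simp
  also have "\<dots> \<le> (4 * pi) powr (- real CARD('n) / 2) * (p / (s * exp 1)) powr p"
    using True s p by (intro mult_left_mono powr_times_exp_neg_le) auto
  also have "(p / (s * exp 1)) powr p = (4 * p / exp 1) powr p * norm z powr (- 2 * p)"
  proof -
    have "p / (s * exp 1) = (4 * p / exp 1) / (norm z)\<^sup>2"
      by (simp add: s_def field_simps)
    also have "\<dots> powr p = (4 * p / exp 1) powr p / (norm z)\<^sup>2 powr p"
      by (rule powr_divide)
    also have "(norm z)\<^sup>2 powr p = norm z powr (2 * p)"
      using assms(1) by (simp add: powr_powr flip: powr_numeral)
    also have "norm z powr (2 * p) = inverse (norm z powr (- 2 * p))"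
      by (simp add: powr_minus)
    finally show ?thesis
      by (simp only: divide_inverse inverse_inverse_eq)
  qed
  finally have "heat_kernel t z * t powr (a - 1)
    \<le> (4 * pi) powr (- real CARD('n) / 2) * ((4 * p / exp 1) powr p * norm z powr (- 2 * p))" .
  from mult_left_mono[OF this, of "exp (- t)"] show ?thesis
    using True by (simp add: bessel_integrand_def mult_ac)
qed (simp add: bessel_integrand_def)

lemma integrable_bessel_integrand:
  fixes z :: "real^'n::finite"
  assumes "z \<noteq> 0" "a < real CARD('n) / 2 + 1"
  shows "integrable lborel (bessel_integrand a z)"
proof (rule Bochner_Integration.integrable_bound)
  define p where "p = real CARD('n) / 2 + 1 - a"
  define K where "K = (4 * pi) powr (- real CARD('n) / 2) * (4 * p / exp 1) powr p * norm z powr (- 2 * p)"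
  show "integrable lborel (\<lambda>t. K * (indicator {0..} t * exp (- t)))"
    by (intro integrable_mult_right integrable_exp_neg_nonneg_reals)
  have "bessel_integrand a z t \<le> K * (indicator {0..} t * exp (- t))" for t
    unfolding K_def using assms by (intro bessel_integrand_le) (auto simp: p_def)
  thus "AE t in lborel. norm (bessel_integrand a z t) \<le> norm (K * (indicator {0..} t * exp (- t)))"
    by (auto intro: order_trans[OF _ abs_ge_self] simp: bessel_integrand_nonneg)
qed simp

lemma bessel_kernel_le_powr:
  assumes "0 < a" "a < real CARD('n::finite) / 2 + 1"
  shows "\<exists>C. \<forall>z::real^'n. z \<noteq> 0 \<longrightarrow> bessel_kernel a z \<le> C * norm z powr (2 * a - real CARD('n) - 2)"
proof -
  define p where "p = real CARD('n) / 2 + 1 - a"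
  have p: "0 < p" using assms(2) by (simp add: p_def)
  define K where "K = (4 * pi) powr (- real CARD('n) / 2) * (4 * p / exp 1) powr p"
  define I where "I = integral\<^sup>L lborel (\<lambda>t::real. indicator {0..} t * exp (- t))"
  show ?thesis
  proof (intro exI allI impI)
    fix z :: "real^'n"
    assume "z \<noteq> 0"
    have "integral\<^sup>L lborel (bessel_integrand a z) \<le> K * norm z powr (- 2 * p) * I"
      unfolding I_def
      by (subst integral_mult_right_zero[symmetric], intro integral_mono integrable_mult_right
          integrable_exp_neg_nonneg_reals integrable_bessel_integrand \<open>z \<noteq> 0\<close> assms(2))
        (unfold K_def, rule bessel_integrand_le[OF \<open>z \<noteq> 0\<close> p_def p])
    hence "bessel_kernel a z \<le> K * norm z powr (- 2 * p) * I / Gamma a"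
      unfolding bessel_kernel_eq_integral using Gamma_real_pos[OF assms(1)] by (simp add: divide_right_mono)
    also have "\<dots> = K * I / Gamma a * norm z powr (2 * a - real CARD('n) - 2)"
      by (simp add: p_def algebra_simps)
    finally show "bessel_kernel a z \<le> K * I / Gamma a * norm z powr (2 * a - real CARD('n) - 2)" .
  qed
qed

lemma bessel_kernel_le_far:
  assumes "0 < a" "a < real CARD('n::finite) / 2 + 1"
  shows "\<exists>C\<ge>0. \<forall>\<sigma>>0. \<forall>z::real^'n. \<sigma> \<le> norm z \<longrightarrow>
           bessel_kernel a z \<le> C * \<sigma> powr (2 * a - real CARD('n) - 2)"
proof -
  obtain C where C: "\<And>z::real^'n. z \<noteq> 0 \<Longrightarrow> bessel_kernel a z \<le> C * norm z powr (2 * a - real CARD('n) - 2)"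
    using bessel_kernel_le_powr[OF assms] by blast
  show ?thesis
  proof (intro exI[of _ "max C 0"] conjI allI impI)
    fix \<sigma> :: real and z :: "real^'n"
    assume "0 < \<sigma>" "\<sigma> \<le> norm z"
    hence "bessel_kernel a z \<le> C * norm z powr (2 * a - real CARD('n) - 2)"
      by (intro C) auto
    also have "\<dots> \<le> max C 0 * norm z powr (2 * a - real CARD('n) - 2)"
      by (intro mult_right_mono) auto
    also have "\<dots> \<le> max C 0 * \<sigma> powr (2 * a - real CARD('n) - 2)"
      using assms \<open>0 < \<sigma>\<close> \<open>\<sigma> \<le> norm z\<close> by (intro mult_left_mono powr_mono2') auto
    finally show "bessel_kernel a z \<le> max C 0 * \<sigma> powr (2 * a - real CARD('n) - 2)" .
  qed simp
qed

lemma bessel_kernel_bounded_away: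
  assumes "0 < a" "a < real CARD('n::finite) / 2 + 1" "0 < \<sigma>"
  shows "\<exists>B. \<forall>z::real^'n. \<sigma> \<le> norm z \<longrightarrow> bessel_kernel a z \<le> B"
  using bessel_kernel_le_far[OF assms(1,2)] assms(3) by blast

lemma bessel_kernel_small_far:
  assumes "0 < a" "a < real CARD('n::finite) / 2 + 1" "0 < \<delta>"
  shows "\<exists>R>0. \<forall>z::real^'n. R \<le> norm z \<longrightarrow> bessel_kernel a z \<le> \<delta>"
proof -
  obtain C where C: "\<forall>\<sigma>>0. \<forall>z::real^'n. \<sigma> \<le> norm z \<longrightarrow>
      bessel_kernel a z \<le> C * \<sigma> powr (2 * a - real CARD('n) - 2)"
    using bessel_kernel_le_far[OF assms(1,2)] by blast
  have "((\<lambda>R. C * R powr (2 * a - real CARD('n) - 2)) \<longlongrightarrow> C * 0) at_top"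
    using assms(2) by (intro tendsto_mult tendsto_const tendsto_neg_powr filterlim_ident) auto
  hence "eventually (\<lambda>R. C * R powr (2 * a - real CARD('n) - 2) < \<delta>) at_top"
    using assms(3) by (intro order_tendstoD(2)) auto
  then obtain R0 where R0: "\<And>R. R0 \<le> R \<Longrightarrow> C * R powr (2 * a - real CARD('n) - 2) < \<delta>"
    unfolding eventually_at_top_linorder by blast
  define R where "R = max R0 1"
  have "0 < R" "C * R powr (2 * a - real CARD('n) - 2) < \<delta>"
    using R0 by (auto simp: R_def)
  thus ?thesis
    using C by (intro exI[of _ R]) force
qed

lemma bessel_integrand_ge:
  fixes z :: "real^'n::finite"
  assumes "0 < a" "0 < norm z" "norm z \<le> 1" "(norm z)\<^sup>2 \<le> t" "t \<le> 2 * (norm z)\<^sup>2"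
  shows "exp (- 2) * (8 * pi) powr (- real CARD('n) / 2) * exp (- 1 / 4) / 2
           * norm z powr (2 * a - real CARD('n) - 2) \<le> bessel_integrand a z t"
proof -
  define r where "r = norm z"
  have r: "0 < r" "r\<^sup>2 \<le> 1" and t: "r\<^sup>2 \<le> t" "t \<le> 2 * r\<^sup>2"
    using assms by (auto simp: r_def power_le_one)
  have "0 < t" using r t by (meson order.strict_trans2 zero_less_power)
  have e1: "exp (- 2) \<le> exp (- t)"
    using t r by simp
  have e2: "(8 * pi * r\<^sup>2) powr (- real CARD('n) / 2) \<le> (4 * pi * t) powr (- real CARD('n) / 2)"
    using t \<open>0 < t\<close> by (intro powr_mono2') auto
  have e3: "exp (- 1 / 4) \<le> exp (- r\<^sup>2 / (4 * t))"
    using t \<open>0 < t\<close> by (simp add: divide_simps)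
  have e4: "(r\<^sup>2) powr (a - 1) / 2 \<le> t powr (a - 1)"
    using r t assms(1) by (intro powr_div_2_le_doubling) auto
  have "(r\<^sup>2) powr y = r powr (2 * y)" for y
    using powr_powr[of r 2 y] r by simp
  hence "(8 * pi * r\<^sup>2) powr (- real CARD('n) / 2) * (r\<^sup>2) powr (a - 1)
      = (8 * pi) powr (- real CARD('n) / 2) * r powr (2 * a - real CARD('n) - 2)"
    by (simp add: powr_mult algebra_simps flip: powr_add)
  hence "exp (- 2) * (8 * pi) powr (- real CARD('n) / 2) * exp (- 1 / 4) / 2 * r powr (2 * a - real CARD('n) - 2)
      = exp (- 2) * (8 * pi * r\<^sup>2) powr (- real CARD('n) / 2) * exp (- 1 / 4) * ((r\<^sup>2) powr (a - 1) / 2)"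
    by (simp add: mult_ac)
  also have "\<dots> \<le> exp (- t) * (4 * pi * t) powr (- real CARD('n) / 2) * exp (- r\<^sup>2 / (4 * t)) * t powr (a - 1)"
    using e1 e2 e3 e4 by (intro mult_mono) auto
  also have "\<dots> = bessel_integrand a z t"
    using \<open>0 < t\<close> by (simp add: bessel_integrand_def heat_kernel_def r_def mult_ac)
  finally show ?thesis
    unfolding r_def .
qed

lemma bessel_kernel_ge_powr:
  assumes "0 < a" "a < real CARD('n::finite) / 2 + 1"
  shows "\<exists>c>0. \<forall>z::real^'n. 0 < norm z \<and> norm z \<le> 1 \<longrightarrow>
           c * norm z powr (2 * a - real CARD('n)) \<le> bessel_kernel a z"
proof -
  define c0 where "c0 = exp (- 2) * (8 * pi) powr (- real CARD('n) / 2) * exp (- 1 / 4) / 2"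
  have "0 < c0" by (simp add: c0_def)
  show ?thesis
  proof (intro exI[of _ "c0 / Gamma a"] conjI allI impI)
    show "0 < c0 / Gamma a" using \<open>0 < c0\<close> Gamma_real_pos[OF assms(1)] by simp
    fix z :: "real^'n"
    assume z: "0 < norm z \<and> norm z \<le> 1"
    define r where "r = norm z"
    have "0 < r" using z by (simp add: r_def)
    have "c0 * r powr (2 * a - real CARD('n)) = c0 * (r\<^sup>2 * r powr (2 * a - real CARD('n) - 2))"
      using powr_add[of r 2 "2 * a - real CARD('n) - 2"] \<open>0 < r\<close> by simp
    also have "\<dots> = integral\<^sup>L lborel
        (\<lambda>t. indicator {r\<^sup>2..2 * r\<^sup>2} t * (c0 * r powr (2 * a - real CARD('n) - 2)))"
      using \<open>0 < r\<close> by simp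
    also have "\<dots> \<le> integral\<^sup>L lborel (bessel_integrand a z)"
    proof (rule integral_mono)
      fix t
      show "indicator {r\<^sup>2..2 * r\<^sup>2} t * (c0 * r powr (2 * a - real CARD('n) - 2)) \<le> bessel_integrand a z t"
        using bessel_integrand_ge[OF assms(1), of z t] z bessel_integrand_nonneg[of a z t]
        unfolding r_def c0_def by (auto simp: indicator_def)
    qed (use z assms(2) in \<open>auto intro: integrable_bessel_integrand\<close>)
    finally show "c0 / Gamma a * norm z powr (2 * a - real CARD('n)) \<le> bessel_kernel a z"
      unfolding bessel_kernel_eq_integral r_def using Gamma_real_pos[OF assms(1)]
      by (simp add: divide_right_mono)
  qed
qed

definition real_bessel_pot :: "real \<Rightarrow> (real^'n::finite \<Rightarrow> real) \<Rightarrow> real^'n \<Rightarrow> real" where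
  "real_bessel_pot a f x = (\<integral>y. bessel_kernel a (x - y) * f y \<partial>lebesgue)"

lemma real_bessel_pot_bounds:
  fixes f :: "real^'n::finite \<Rightarrow> real"
  assumes "0 < a" and B: "\<And>z::real^'n. \<sigma> \<le> norm z \<Longrightarrow> bessel_kernel a z \<le> B"
    and f: "integrable lebesgue f" "\<And>y. 0 \<le> f y"
    and supp: "\<And>y. f y \<noteq> 0 \<Longrightarrow> \<sigma> \<le> norm (x - y)"
  shows "integrable lebesgue (\<lambda>y. bessel_kernel a (x - y) * f y)"
    and "0 \<le> real_bessel_pot a f x"
    and "real_bessel_pot a f x \<le> B * integral\<^sup>L lebesgue f"
proof -
  have le: "bessel_kernel a (x - y) * f y \<le> B * f y" for y
    using B[OF supp] f(2)[of y] by (cases "f y = 0") (auto intro: mult_right_mono)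
  have "(\<lambda>y. bessel_kernel a (x - y)) \<in> borel_measurable lebesgue"
    by (intro measurable_completion) measurable
  hence "(\<lambda>y. bessel_kernel a (x - y) * f y) \<in> borel_measurable lebesgue"
    using f(1) by measurable
  moreover have "norm (bessel_kernel a (x - y) * f y) \<le> norm (B * f y)" for y
  proof -
    have "0 \<le> bessel_kernel a (x - y) * f y"
      using bessel_kernel_nonneg[OF assms(1)] f(2) by (intro mult_nonneg_nonneg)
    thus ?thesis
      using le[of y] by (metis abs_ge_self abs_of_nonneg order_trans real_norm_def)
  qed
  ultimately show int: "integrable lebesgue (\<lambda>y. bessel_kernel a (x - y) * f y)"
    by (intro Bochner_Integration.integrable_bound[OF integrable_mult_right[OF f(1), of B]] AE_I2)
  show "0 \<le> real_bessel_pot a f x"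
    unfolding real_bessel_pot_def using bessel_kernel_nonneg[OF assms(1)] f(2)
    by (intro integral_nonneg_AE AE_I2 mult_nonneg_nonneg) auto
  show "real_bessel_pot a f x \<le> B * integral\<^sup>L lebesgue f"
    unfolding real_bessel_pot_def integral_mult_right_zero[symmetric]
    by (intro integral_mono int integrable_mult_right f(1) le)
qed

lemma bessel_pot_measurable:
  fixes g :: "'n::finite fn"
  assumes [measurable]: "g \<in> borel_measurable borel"
  shows "bessel_pot a g \<in> borel_measurable lebesgue"
proof -
  have "bessel_pot a g = (\<lambda>x. \<integral>y. complex_of_real (bessel_kernel a (x - y)) * g y \<partial>lborel)"
    unfolding bessel_pot_def by (intro ext integral_completion) measurable
  also have "\<dots> \<in> borel_measurable lborel"
    by (rule lborel.borel_measurable_lebesgue_integral) measurable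
  finally show ?thesis
    by (rule measurable_completion)
qed

lemma sandwich_form_real_indicator:
  fixes S :: "(real^'n::finite) set"
  shows "sandwich_form (\<lambda>x. complex_of_real (\<epsilon> * indicator S x)) g g = complex_of_real
     (\<epsilon> * (\<integral>x. indicator S x * (cmod (bessel_pot (real CARD('n) / 4) g x))\<^sup>2 \<partial>lebesgue))"
proof -
  have eq: "complex_of_real (\<epsilon> * indicator S x) * bessel_pot (real CARD('n) / 4) g x
          * cnj (bessel_pot (real CARD('n) / 4) g x)
      = complex_of_real (\<epsilon> * (indicator S x * (cmod (bessel_pot (real CARD('n) / 4) g x))\<^sup>2))"
    for x :: "real^'n"
    using complex_norm_square[of "bessel_pot (real CARD('n) / 4) g x"] by (simp add: mult.assoc)
  show ?thesis
    unfolding sandwich_form_def eq by (simp only: integral_complex_of_real integral_mult_right_zero)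
qed

lemma sandwich_weak_norm_ge:
  fixes f :: "'n::finite fn"
  assumes "0 \<le> m"
    and orth: "\<And>u :: nat \<Rightarrow> 'n fn. (\<forall>i<k. u i \<in> l2) \<Longrightarrow>
      \<exists>g\<in>l2. l2_norm g \<le> 1 \<and> (\<forall>i<k. l2_inner g (u i) = 0) \<and> m \<le> cmod (sandwich_form f g g)"
  shows "ennreal (real (k + 1) * m) \<le> sandwich_weak_norm f"
proof -
  have "ennreal m \<le> sandwich_dist f u v k" if uv: "\<forall>i<k. u i \<in> l2 \<and> v i \<in> l2" for u v
  proof -
    obtain g where g: "g \<in> l2" "l2_norm g \<le> 1" "\<forall>i<k. l2_inner g (u i) = 0"
      and "m \<le> cmod (sandwich_form f g g)"
      using orth uv by blast
    hence "ennreal m \<le> ennreal (cmod (sandwich_form f g g - (\<Sum>i<k. l2_inner g (u i) * l2_inner (v i) g)))"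
      by (simp add: ennreal_leI)
    also have "\<dots> \<le> (SUP gh \<in> {(g, h). g \<in> l2 \<and> h \<in> l2 \<and> l2_norm g \<le> 1 \<and> l2_norm h \<le> 1}.
        ennreal (cmod (sandwich_form f (fst gh) (snd gh) - (\<Sum>i<k. l2_inner (fst gh) (u i) * l2_inner (v i) (snd gh)))))"
      using g by (intro SUP_upper2[where i="(g, g)"]) auto
    finally show ?thesis
      unfolding sandwich_dist_def by simp
  qed
  hence "ennreal m \<le> sandwich_sing_val f k"
    unfolding sandwich_sing_val_def by (auto intro!: INF_greatest)
  hence "of_nat (k + 1) * ennreal m \<le> of_nat (k + 1) * sandwich_sing_val f k"
    by (intro mult_left_mono) auto
  also have "\<dots> \<le> sandwich_weak_norm f"
    unfolding sandwich_weak_norm_def by (rule SUP_upper) simp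
  finally show ?thesis
    using \<open>0 \<le> m\<close> by (simp add: ennreal_mult' ennreal_of_nat_eq_real_of_nat)
qed

section \<open>Dyadic bumps\<close>

definition annulus :: "real^'n::finite \<Rightarrow> nat \<Rightarrow> (real^'n) set" where
  "annulus p j = cball p ((1 / 2) ^ j) - cball p ((1 / 2) ^ Suc j)"

definition annulus_volume :: "nat \<Rightarrow> nat \<Rightarrow> real" where
  "annulus_volume d j = unit_ball_vol (real d) * (1 - (1 / 2) ^ d) * ((1 / 2) ^ j) ^ d"

lemma annulus_volume_pos [simp]: "0 < d \<Longrightarrow> 0 < annulus_volume d j"
  unfolding annulus_volume_def by (simp add: power_less_one_iff)

lemma annulus_volume_nonneg [simp]: "0 \<le> annulus_volume d j"
  unfolding annulus_volume_def by (simp add: power_le_one)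

lemma annulus_volume_nonzero [simp]: "0 < d \<Longrightarrow> annulus_volume d j \<noteq> 0"
  using annulus_volume_pos[of d j] by linarith

lemma annulus_sets [measurable]: "annulus p j \<in> sets borel" "annulus p j \<in> sets lebesgue"
  unfolding annulus_def by auto

lemma mem_annulus: "y \<in> annulus p j \<longleftrightarrow> (1 / 2) ^ Suc j < dist p y \<and> dist p y \<le> (1 / 2) ^ j"
  unfolding annulus_def by auto

lemma annulus_disjoint:
  assumes "i \<noteq> j"
  shows "annulus p i \<inter> annulus p j = {}"
proof -
  have "annulus p i \<inter> annulus p j = {}" if "i < j" for i j
  proof -
    have "(1 / 2 :: real) ^ j \<le> (1 / 2) ^ Suc i"
      using that by (intro power_decreasing) auto
    thus ?thesis by (auto simp: mem_annulus)
  qed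
  thus ?thesis using assms by (metis Int_commute linorder_neqE_nat)
qed

lemma emeasure_annulus:
  "emeasure lebesgue (annulus (p::real^'n::finite) j) = ennreal (annulus_volume CARD('n) j)"
proof -
  have "emeasure lebesgue (annulus p j)
      = emeasure lborel (cball p ((1 / 2) ^ j)) - emeasure lborel (cball p ((1 / 2) ^ Suc j))"
    unfolding annulus_def
    by (simp add: emeasure_Diff emeasure_cball cball_subset_cball_iff)
  also have "\<dots> = ennreal (unit_ball_vol (real CARD('n)) * ((1 / 2) ^ j) ^ CARD('n)
                          - unit_ball_vol (real CARD('n)) * ((1 / 2) * (1 / 2) ^ j) ^ CARD('n))"
    by (simp add: emeasure_cball ennreal_minus power_mono)
  also have "\<dots> = ennreal (annulus_volume CARD('n) j)"
    unfolding annulus_volume_def power_mult_distrib by (simp add: algebra_simps)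
  finally show ?thesis .
qed

lemma measure_annulus: "measure lebesgue (annulus (p::real^'n::finite) j) = annulus_volume CARD('n) j"
  using emeasure_annulus[of p j] annulus_volume_pos[of "CARD('n)" j] by (simp add: measure_def)

lemma integrable_annulus: "integrable lebesgue (indicator (annulus (p::real^'n::finite) j) :: _ \<Rightarrow> real)"
  by (intro integrable_real_indicator) (auto simp: emeasure_annulus)

lemma annulus_dist_bounds:
  fixes p x y :: "real^'n::finite"
  assumes "j \<le> J" "dist p x \<le> (1 / 2) ^ J / 4" "y \<in> annulus p j"
  shows "(1 / 2) ^ j / 4 \<le> dist x y" "dist x y \<le> 2 * (1 / 2) ^ j"
proof -
  have "(1 / 2 :: real) ^ J \<le> (1 / 2) ^ j"
    using assms(1) by (intro power_decreasing) auto
  moreover have "(1 / 2) ^ j / 2 < dist p y" "dist p y \<le> (1 / 2) ^ j"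
    using assms(3) by (auto simp: mem_annulus)
  moreover have "dist p y \<le> dist p x + dist x y" "dist x y \<le> dist p x + dist p y"
    by (simp_all add: dist_triangle dist_triangle3)
  ultimately show "(1 / 2) ^ j / 4 \<le> dist x y" "dist x y \<le> 2 * (1 / 2) ^ j"
    using assms(2) by linarith+
qed

lemma sqrt_annulus_volume_scaling:
  "sqrt (annulus_volume d j) * (2 * (1 / 2) ^ j) powr (- real d / 2) = sqrt (annulus_volume d 0) * 2 powr (- real d / 2)"
proof -
  have "sqrt (((1 / 2) ^ j) ^ d) = ((1 / 2) ^ j) powr (real d / 2)"
    by (simp add: powr_half_sqrt[symmetric] powr_realpow[symmetric] powr_powr)
  moreover have "((1 / 2 :: real) ^ j) powr (real d / 2) * ((1 / 2) ^ j) powr (- real d / 2) = 1"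
    by (simp flip: powr_add)
  ultimately show ?thesis
    unfolding annulus_volume_def by (simp add: real_sqrt_mult powr_mult mult_ac)
qed

lemma annulus_kernel_ge:
  fixes K :: "real^'n::finite \<Rightarrow> real" and p x y :: "real^'n"
  assumes K: "\<And>z. 0 < norm z \<Longrightarrow> norm z \<le> 1 \<Longrightarrow> c * norm z powr (- real CARD('n) / 2) \<le> K z"
    and "0 \<le> c" "j \<in> {1..J}" "dist p x \<le> (1 / 2) ^ J / 4" "y \<in> annulus p j"
  shows "c * (2 * (1 / 2) ^ j) powr (- real CARD('n) / 2) \<le> K (x - y)"
proof -
  have lo: "(1 / 2) ^ j / 4 \<le> norm (x - y)" and up: "norm (x - y) \<le> 2 * (1 / 2) ^ j"
    using annulus_dist_bounds[OF _ assms(4,5)] assms(3) by (auto simp: dist_norm)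
  have "0 < norm (x - y)"
    using lo by (rule less_le_trans[rotated]) simp
  moreover have "norm (x - y) \<le> 1"
    using up assms(3) power_decreasing[of 1 j "1 / 2 :: real"] by simp
  ultimately have "c * norm (x - y) powr (- real CARD('n) / 2) \<le> K (x - y)"
    by (rule K)
  moreover have "c * (2 * (1 / 2) ^ j) powr (- real CARD('n) / 2) \<le> c * norm (x - y) powr (- real CARD('n) / 2)"
    using \<open>0 \<le> c\<close> \<open>0 < norm (x - y)\<close> up by (intro mult_left_mono powr_mono2') auto
  ultimately show ?thesis by linarith
qed

text \<open>Each annulus contributes \<open>1\<close> to the squared \<open>L\<^sub>2\<close>-norm and, as the kernel of
  \<open>(1 - \<Delta>)\<^sup>-\<^sup>d\<^sup>/\<^sup>4\<close> is of size \<open>|z|\<^sup>-\<^sup>d\<^sup>/\<^sup>2\<close> near \<open>0\<close>, the same amount to its potential near \<open>p\<close>.\<close>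
definition dyadic_bump :: "nat \<Rightarrow> real^'n::finite \<Rightarrow> real^'n \<Rightarrow> real" where
  "dyadic_bump J p y = (\<Sum>j\<in>{1..J}. indicator (annulus p j) y / sqrt (annulus_volume CARD('n) j))"

lemma dyadic_bump_measurable [measurable]: "dyadic_bump J p \<in> borel_measurable borel"
  unfolding dyadic_bump_def by measurable

lemma dyadic_bump_nonneg: "0 \<le> dyadic_bump J p y"
  unfolding dyadic_bump_def by (intro sum_nonneg divide_nonneg_nonneg) auto

lemma dyadic_bump_support:
  assumes "dyadic_bump J p y \<noteq> 0"
  shows "(1 / 2) ^ Suc J < dist p y \<and> dist p y \<le> 1 / 2"
proof -
  obtain j where j: "j \<in> {1..J}" "y \<in> annulus p j"
    using assms unfolding dyadic_bump_def by (metis (no_types, lifting) div_0 indicator_simps(2) sum.neutral)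
  have "(1 / 2 :: real) ^ Suc J \<le> (1 / 2) ^ Suc j"
    using j(1) by (intro power_decreasing) auto
  moreover have "(1 / 2 :: real) ^ j \<le> 1 / 2"
    using j(1) power_decreasing[of 1 j "1 / 2 :: real"] by simp
  ultimately show ?thesis
    using j(2) unfolding mem_annulus by (meson le_less_trans order_trans)
qed

lemma integrable_dyadic_bump: "integrable lebesgue (dyadic_bump J (p::real^'n::finite))"
  unfolding dyadic_bump_def by (intro Bochner_Integration.integrable_sum integrable_divide_zero integrable_annulus)

lemma integral_dyadic_bump:
  "integral\<^sup>L lebesgue (dyadic_bump J (p::real^'n::finite)) = (\<Sum>j\<in>{1..J}. sqrt (annulus_volume CARD('n) j))"
  unfolding dyadic_bump_def
  using annulus_volume_pos[of "CARD('n)"]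
  by (subst Bochner_Integration.integral_sum)
    (auto intro!: sum.cong integrable_annulus simp: measure_annulus real_div_sqrt less_imp_le)

lemma dyadic_bump_squared:
  "(dyadic_bump J (p::real^'n::finite) y)\<^sup>2 = (\<Sum>j\<in>{1..J}. indicator (annulus p j) y / annulus_volume CARD('n) j)"
proof (cases "\<exists>j\<in>{1..J}. y \<in> annulus p j")
  case True
  then obtain j where j: "j \<in> {1..J}" "y \<in> annulus p j" by blast
  have other: "y \<notin> annulus p i" if "i \<noteq> j" for i
    using annulus_disjoint[OF that, of p] j by auto
  have "dyadic_bump J p y = 1 / sqrt (annulus_volume CARD('n) j)"
    unfolding dyadic_bump_def by (subst sum.remove[OF _ j(1)]) (auto simp: j other intro!: sum.neutral)
  moreover have "(\<Sum>j\<in>{1..J}. indicator (annulus p j) y / annulus_volume CARD('n) j) = 1 / annulus_volume CARD('n) j"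
    by (subst sum.remove[OF _ j(1)]) (auto simp: j other intro!: sum.neutral)
  ultimately show ?thesis
    using annulus_volume_pos[of "CARD('n)" j] by (simp add: power_divide)
next
  case False
  thus ?thesis unfolding dyadic_bump_def by (auto intro!: sum.neutral)
qed

lemma integrable_dyadic_bump_squared: "integrable lebesgue (\<lambda>y. (dyadic_bump J (p::real^'n::finite) y)\<^sup>2)"
  unfolding dyadic_bump_squared
  by (intro Bochner_Integration.integrable_sum integrable_divide_zero integrable_annulus)

lemma integral_dyadic_bump_squared:
  "integral\<^sup>L lebesgue (\<lambda>y. (dyadic_bump J (p::real^'n::finite) y)\<^sup>2) = real J"
  unfolding dyadic_bump_squared
  by (subst Bochner_Integration.integral_sum)
    (auto intro!: integrable_annulus simp: measure_annulus)

lemma dyadic_bump_l2: "(\<lambda>y. complex_of_real (dyadic_bump J (p::real^'n::finite) y)) \<in> l2"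
  unfolding l2_def using integrable_dyadic_bump_squared[of J p]
  by (auto intro: measurable_completion)

lemma dyadic_bump_support_dist:
  fixes p x y :: "real^'n::finite"
  assumes "dist p x \<le> (1 / 2) ^ J / 4" "dyadic_bump J p y \<noteq> 0"
  shows "(1 / 2) ^ J / 4 \<le> norm (x - y)"
proof -
  have "(1 / 2) ^ J / 2 < dist p y"
    using dyadic_bump_support[OF assms(2)] by simp
  moreover have "dist p y \<le> dist p x + norm (x - y)"
    by (metis dist_norm dist_triangle)
  ultimately show ?thesis
    using assms(1) by linarith
qed

lemma dyadic_bump_separated:
  assumes "1 < dist p q" "dyadic_bump J p y \<noteq> 0"
  shows "dyadic_bump J q y = 0"
proof (rule ccontr)
  assume "dyadic_bump J q y \<noteq> 0"
  hence "dist q y \<le> 1 / 2" using dyadic_bump_support by blast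
  moreover have "dist p y \<le> 1 / 2" using dyadic_bump_support assms(2) by blast
  moreover have "dist p q \<le> dist p y + dist q y" by (metis dist_commute dist_triangle3)
  ultimately show False using assms(1) by linarith
qed

lemma dyadic_bump_far_dist:
  assumes "dist p x \<le> 1 / 2" "dyadic_bump J q y \<noteq> 0"
  shows "dist p q - 1 \<le> norm (x - y)"
proof -
  have "dist q y \<le> 1 / 2" using dyadic_bump_support assms(2) by blast
  moreover have "dist p q \<le> dist p x + dist x y + dist q y"
    using dist_triangle[of p q x] dist_triangle[of x q y] by (simp add: dist_commute)
  ultimately show ?thesis using assms(1) by (simp add: dist_norm)
qed

lemma bessel_kernel_dyadic_bump_ge:
  fixes p x y :: "real^'n::finite"
  assumes cL: "\<And>z::real^'n. 0 < norm z \<Longrightarrow> norm z \<le> 1 \<Longrightarrow>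
                 cL * norm z powr (- real CARD('n) / 2) \<le> bessel_kernel (real CARD('n) / 4) z"
    and "0 \<le> cL" "dist p x \<le> (1 / 2) ^ J / 4"
  shows "(\<Sum>j\<in>{1..J}. indicator (annulus p j) y
            * (cL * (2 * (1 / 2) ^ j) powr (- real CARD('n) / 2) / sqrt (annulus_volume CARD('n) j)))
       \<le> bessel_kernel (real CARD('n) / 4) (x - y) * dyadic_bump J p y"
  unfolding dyadic_bump_def sum_distrib_left
proof (intro sum_mono)
  fix j
  assume "j \<in> {1..J}"
  thus "indicator (annulus p j) y * (cL * (2 * (1 / 2) ^ j) powr (- real CARD('n) / 2) / sqrt (annulus_volume CARD('n) j))
      \<le> bessel_kernel (real CARD('n) / 4) (x - y) * (indicator (annulus p j) y / sqrt (annulus_volume CARD('n) j))"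
    using annulus_kernel_ge[OF cL \<open>0 \<le> cL\<close> _ assms(3), of j y]
    by (cases "y \<in> annulus p j") (auto simp: divide_right_mono)
qed

lemma real_bessel_pot_dyadic_bump_ge:
  "\<exists>c>0. \<forall>J\<ge>1. \<forall>p x::real^'n::finite. dist p x \<le> (1 / 2) ^ J / 4 \<longrightarrow>
     real J * c \<le> real_bessel_pot (real CARD('n) / 4) (dyadic_bump J p) x"
proof -
  obtain cL where "0 < cL"
    and cL: "\<And>z::real^'n. 0 < norm z \<Longrightarrow> norm z \<le> 1 \<Longrightarrow>
               cL * norm z powr (- real CARD('n) / 2) \<le> bessel_kernel (real CARD('n) / 4) z"
    using bessel_kernel_ge_powr[of "real CARD('n) / 4", where 'n='n] by auto
  define V where "V = annulus_volume CARD('n)"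
  have V: "0 < V j" for j by (simp add: V_def)
  define c where "c = cL * sqrt (V 0) * 2 powr (- real CARD('n) / 2)"
  show ?thesis
  proof (intro exI[of _ c] conjI allI impI)
    show "0 < c" using \<open>0 < cL\<close> V[of 0] by (simp add: c_def)
    fix J :: nat and p x :: "real^'n"
    assume J: "1 \<le> J" and x: "dist p x \<le> (1 / 2) ^ J / 4"
    obtain B where B: "\<And>z::real^'n. (1 / 2) ^ J / 4 \<le> norm z \<Longrightarrow> bessel_kernel (real CARD('n) / 4) z \<le> B"
      using bessel_kernel_bounded_away[of "real CARD('n) / 4" "(1 / 2) ^ J / 4", where 'n='n] by auto
    define w where "w j = cL * (2 * (1 / 2) ^ j) powr (- real CARD('n) / 2) / sqrt (V j)" for j
    have "V j * w j = c" for j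
    proof -
      have "V j * w j = cL * (V j / sqrt (V j)) * (2 * (1 / 2) ^ j) powr (- real CARD('n) / 2)"
        by (simp add: w_def mult_ac)
      also have "V j / sqrt (V j) = sqrt (V j)"
        using V[of j] by (simp add: real_div_sqrt less_imp_le)
      finally show "V j * w j = c"
        using sqrt_annulus_volume_scaling[of "CARD('n)" j] by (simp add: c_def V_def mult_ac)
    qed
    hence "real J * c = (\<integral>y. (\<Sum>j\<in>{1..J}. indicator (annulus p j) y * w j) \<partial>lebesgue)"
      unfolding V_def by (subst Bochner_Integration.integral_sum) (auto intro: integrable_annulus simp: measure_annulus)
    also have "\<dots> \<le> real_bessel_pot (real CARD('n) / 4) (dyadic_bump J p) x"
      unfolding real_bessel_pot_def w_def V_def
      by (intro integral_mono bessel_kernel_dyadic_bump_ge[OF cL _ x] Bochner_Integration.integrable_sum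
          integrable_mult_left integrable_annulus real_bessel_pot_bounds(1)[OF _ B integrable_dyadic_bump
          dyadic_bump_nonneg dyadic_bump_support_dist[OF x]]) (use \<open>0 < cL\<close> in auto)
    finally show "real J * c \<le> real_bessel_pot (real CARD('n) / 4) (dyadic_bump J p) x" .
  qed
qed

section \<open>Combinations of separated bumps\<close>

definition bump_combination :: "nat \<Rightarrow> (nat \<Rightarrow> real^'n::finite) \<Rightarrow> nat \<Rightarrow> (nat \<Rightarrow> complex) \<Rightarrow> 'n fn" where
  "bump_combination J p k c y = (\<Sum>i\<le>k. c i * complex_of_real (dyadic_bump J (p i) y))"

lemma bump_combination_measurable [measurable]: "bump_combination J p k c \<in> borel_measurable borel"
  unfolding bump_combination_def by measurable

lemma norm_bump_combination_squared:
  assumes sep: "\<And>i l. i \<noteq> l \<Longrightarrow> 1 < dist (p i) (p l)"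
  shows "(cmod (bump_combination J p k c y))\<^sup>2 = (\<Sum>i\<le>k. (cmod (c i))\<^sup>2 * (dyadic_bump J (p i) y)\<^sup>2)"
proof (cases "\<exists>i\<le>k. dyadic_bump J (p i) y \<noteq> 0")
  case True
  then obtain i where i: "i \<le> k" "dyadic_bump J (p i) y \<noteq> 0" by blast
  have other: "dyadic_bump J (p l) y = 0" if "l \<noteq> i" for l
    using dyadic_bump_separated[OF sep i(2)] that by metis
  have "bump_combination J p k c y = c i * complex_of_real (dyadic_bump J (p i) y)"
    unfolding bump_combination_def by (subst sum.remove[of _ i]) (use i other in auto)
  moreover have "(\<Sum>l\<le>k. (cmod (c l))\<^sup>2 * (dyadic_bump J (p l) y)\<^sup>2) = (cmod (c i))\<^sup>2 * (dyadic_bump J (p i) y)\<^sup>2"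
    by (subst sum.remove[of _ i]) (use i other in auto)
  ultimately show ?thesis by (simp add: norm_mult power_mult_distrib)
next
  case False
  thus ?thesis unfolding bump_combination_def by auto
qed

lemma bump_combination_l2:
  assumes "\<And>i l. i \<noteq> l \<Longrightarrow> 1 < dist (p i) (p l)"
  shows "bump_combination J p k c \<in> l2"
    and "l2_norm (bump_combination J p k c) = sqrt (real J * (\<Sum>i\<le>k. (cmod (c i))\<^sup>2))"
proof -
  have sq: "\<And>y. (cmod (bump_combination J p k c y))\<^sup>2 = (\<Sum>i\<le>k. (cmod (c i))\<^sup>2 * (dyadic_bump J (p i) y)\<^sup>2)"
    using norm_bump_combination_squared[OF assms] .
  have int: "integrable lebesgue (\<lambda>y. \<Sum>i\<le>k. (cmod (c i))\<^sup>2 * (dyadic_bump J (p i) y)\<^sup>2)"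
    by (intro Bochner_Integration.integrable_sum integrable_mult_right integrable_dyadic_bump_squared)
  thus "bump_combination J p k c \<in> l2"
    by (auto simp: l2_def sq intro: measurable_completion)
  have "integral\<^sup>L lebesgue (\<lambda>y. \<Sum>i\<le>k. (cmod (c i))\<^sup>2 * (dyadic_bump J (p i) y)\<^sup>2)
      = (\<Sum>i\<le>k. (cmod (c i))\<^sup>2 * real J)"
    by (subst Bochner_Integration.integral_sum)
      (auto simp: integral_dyadic_bump_squared integrable_dyadic_bump_squared)
  thus "l2_norm (bump_combination J p k c) = sqrt (real J * (\<Sum>i\<le>k. (cmod (c i))\<^sup>2))"
    unfolding l2_norm_def sq by (simp add: sum_distrib_left mult_ac)
qed

lemma l2_inner_bump_combination:
  assumes "u \<in> l2"
  shows "l2_inner (bump_combination J p k c) u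
       = (\<Sum>i\<le>k. c i * l2_inner (\<lambda>y. complex_of_real (dyadic_bump J (p i) y)) u)"
proof -
  have "l2_inner (bump_combination J p k c) u
      = (\<integral>y. (\<Sum>i\<le>k. c i * (complex_of_real (dyadic_bump J (p i) y) * cnj (u y))) \<partial>lebesgue)"
    unfolding l2_inner_def bump_combination_def
    by (simp add: sum_distrib_right mult.assoc)
  also have "\<dots> = (\<Sum>i\<le>k. c i * l2_inner (\<lambda>y. complex_of_real (dyadic_bump J (p i) y)) u)"
    unfolding l2_inner_def
    by (subst Bochner_Integration.integral_sum) (auto intro!: integrable_mult_cnj_l2 dyadic_bump_l2 assms)
  finally show ?thesis .
qed

lemma obtain_orthogonal_bump_combination:
  fixes p :: "nat \<Rightarrow> real^'n::finite"
  assumes "1 \<le> J" "\<forall>j<k. u j \<in> l2"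
  obtains c where "(\<Sum>i\<le>k. (cmod (c i))\<^sup>2) = 1 / real J"
    and "\<forall>j<k. l2_inner (bump_combination J p k c) (u j) = 0"
proof -
  define a where "a i j = l2_inner (\<lambda>y. complex_of_real (dyadic_bump J (p i) y)) (u j)" for i j
  obtain c0 where c0: "\<exists>i\<in>{..k}. c0 i \<noteq> 0" "\<forall>j<k. (\<Sum>i\<in>{..k}. c0 i * a i j) = 0"
    using homogeneous_system_nontrivial_solution[of "{..k}" k a] by auto
  define s where "s = (\<Sum>i\<le>k. (cmod (c0 i))\<^sup>2)"
  have "0 < s"
  proof -
    obtain i where "i \<le> k" "c0 i \<noteq> 0" using c0(1) by auto
    hence "0 < (cmod (c0 i))\<^sup>2" "(cmod (c0 i))\<^sup>2 \<le> s"
      unfolding s_def by (auto intro: member_le_sum)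
    thus ?thesis by linarith
  qed
  define q where "q = 1 / sqrt (real J * s)"
  show ?thesis
  proof
    have "(\<Sum>i\<le>k. (cmod (c0 i * complex_of_real q))\<^sup>2) = q\<^sup>2 * s"
      unfolding s_def by (simp add: norm_mult power_mult_distrib sum_distrib_left mult_ac)
    thus "(\<Sum>i\<le>k. (cmod (c0 i * complex_of_real q))\<^sup>2) = 1 / real J"
      using \<open>0 < s\<close> assms(1) by (simp add: q_def power_divide)
    show "\<forall>j<k. l2_inner (bump_combination J p k (\<lambda>i. c0 i * complex_of_real q)) (u j) = 0"
    proof (intro allI impI)
      fix j
      assume "j < k"
      hence "l2_inner (bump_combination J p k (\<lambda>i. c0 i * complex_of_real q)) (u j)
          = complex_of_real q * (\<Sum>i\<in>{..k}. c0 i * a i j)"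
        using assms(2) by (simp add: l2_inner_bump_combination a_def sum_distrib_left mult_ac)
      thus "l2_inner (bump_combination J p k (\<lambda>i. c0 i * complex_of_real q)) (u j) = 0"
        using c0(2) \<open>j < k\<close> by simp
    qed
  qed
qed

lemma bessel_pot_bump_combination:
  assumes "\<And>l. l \<le> k \<Longrightarrow> integrable lebesgue (\<lambda>y. bessel_kernel a (x - y) * dyadic_bump J (p l) y)"
  shows "bessel_pot a (bump_combination J p k c) x
       = (\<Sum>l\<le>k. c l * complex_of_real (real_bessel_pot a (dyadic_bump J (p l)) x))"
proof -
  have "bessel_pot a (bump_combination J p k c) x
      = (\<integral>y. (\<Sum>l\<le>k. c l * complex_of_real (bessel_kernel a (x - y) * dyadic_bump J (p l) y)) \<partial>lebesgue)"
    unfolding bessel_pot_def bump_combination_def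
    by (intro Bochner_Integration.integral_cong refl) (simp add: sum_distrib_left mult_ac)
  also have "\<dots> = (\<Sum>l\<le>k. (\<integral>y. c l * complex_of_real (bessel_kernel a (x - y) * dyadic_bump J (p l) y) \<partial>lebesgue))"
    by (rule Bochner_Integration.integral_sum) (intro integrable_mult_right integrable_of_real assms, simp)
  also have "\<dots> = (\<Sum>l\<le>k. c l * complex_of_real (real_bessel_pot a (dyadic_bump J (p l)) x))"
    unfolding real_bessel_pot_def by (simp only: integral_mult_right_zero integral_complex_of_real)
  finally show ?thesis .
qed

lemma bessel_pot_bump_combination_near_center:
  fixes p :: "nat \<Rightarrow> real^'n::finite" and c :: "nat \<Rightarrow> complex"
  assumes sep: "\<And>i l. i \<noteq> l \<Longrightarrow> R \<le> dist (p i) (p l)"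
    and "0 \<le> c1" and c1: "\<And>q x::real^'n. dist q x \<le> (1 / 2) ^ J / 4 \<Longrightarrow>
           real J * c1 \<le> real_bessel_pot (real CARD('n) / 4) (dyadic_bump J q) x"
    and Bn: "\<And>z::real^'n. (1 / 2) ^ J / 4 \<le> norm z \<Longrightarrow> bessel_kernel (real CARD('n) / 4) z \<le> Bn"
    and Bf: "\<And>z::real^'n. R - 1 \<le> norm z \<Longrightarrow> bessel_kernel (real CARD('n) / 4) z \<le> Bf"
    and i: "i \<le> k" and x: "dist (p i) x \<le> (1 / 2) ^ J / 4"
  defines "A \<equiv> bessel_pot (real CARD('n) / 4) (bump_combination J p k c) x"
    and "I \<equiv> \<Sum>j\<in>{1..J}. sqrt (annulus_volume CARD('n) j)"
  shows "cmod (c i) * (real J * c1) - Bf * I * (\<Sum>l\<le>k. cmod (c l)) \<le> cmod A"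
    and "cmod A \<le> (Bn * I + Bf * I) * (\<Sum>l\<le>k. cmod (c l))"
proof -
  define P where "P l = real_bessel_pot (real CARD('n) / 4) (dyadic_bump J (p l)) x" for l
  have "dist (p i) x \<le> 1 / 2"
    using x power_decreasing[of 0 J "1 / 2 :: real"] by simp
  have a: "0 < real CARD('n) / 4" by simp
  have far: "integrable lebesgue (\<lambda>y. bessel_kernel (real CARD('n) / 4) (x - y) * dyadic_bump J (p l) y)
      \<and> 0 \<le> P l \<and> P l \<le> Bf * I" if "l \<noteq> i" for l
  proof -
    have "R - 1 \<le> norm (x - y)" if "dyadic_bump J (p l) y \<noteq> 0" for y
      using dyadic_bump_far_dist[OF \<open>dist (p i) x \<le> 1 / 2\<close> that] sep[of i l] \<open>l \<noteq> i\<close> by simp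
    from real_bessel_pot_bounds[OF a Bf integrable_dyadic_bump dyadic_bump_nonneg this]
    show ?thesis by (simp add: P_def I_def integral_dyadic_bump)
  qed
  note near = real_bessel_pot_bounds[OF a Bn integrable_dyadic_bump dyadic_bump_nonneg
      dyadic_bump_support_dist[OF x]]
  have "A = (\<Sum>l\<le>k. c l * complex_of_real (P l))"
    unfolding A_def P_def using near(1) far by (intro bessel_pot_bump_combination) metis
  moreover have "real J * c1 \<le> P i" "P i \<le> Bn * I"
    using c1[OF x] near(3) by (simp_all add: P_def I_def integral_dyadic_bump)
  ultimately show "cmod (c i) * (real J * c1) - Bf * I * (\<Sum>l\<le>k. cmod (c l)) \<le> cmod A"
    and "cmod A \<le> (Bn * I + Bf * I) * (\<Sum>l\<le>k. cmod (c l))"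
    using norm_sum_dominant_term[OF i, of "real J * c1" P "Bn * I" "Bf * I" c] far \<open>0 \<le> c1\<close> by auto
qed

lemma sandwich_form_bump_combination_ge:
  fixes p :: "nat \<Rightarrow> real^'n::finite" and c :: "nat \<Rightarrow> complex" and k :: nat
  assumes sep: "\<And>i l. i \<noteq> l \<Longrightarrow> R \<le> dist (p i) (p l)" "2 \<le> R"
    and "0 \<le> c1" and c1: "\<And>q x::real^'n. dist q x \<le> (1 / 2) ^ J / 4 \<Longrightarrow>
           real J * c1 \<le> real_bessel_pot (real CARD('n) / 4) (dyadic_bump J q) x"
    and Bn: "\<And>z::real^'n. (1 / 2) ^ J / 4 \<le> norm z \<Longrightarrow> bessel_kernel (real CARD('n) / 4) z \<le> Bn"
    and Bf: "\<And>z::real^'n. R - 1 \<le> norm z \<Longrightarrow> bessel_kernel (real CARD('n) / 4) z \<le> Bf" "0 \<le> Bf"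
    and r: "0 < r" "r \<le> (1 / 2) ^ J / 4" and "0 \<le> \<epsilon>"
  defines "S \<equiv> \<Union>i\<le>k. cball (p i) r"
    and "I \<equiv> \<Sum>j\<in>{1..J}. sqrt (annulus_volume CARD('n) j)"
  shows "\<epsilon> * (unit_ball_vol (real CARD('n)) * r ^ CARD('n))
           * (\<Sum>i\<le>k. (cmod (c i) * (real J * c1))\<^sup>2 / 2 - (Bf * I * (\<Sum>l\<le>k. cmod (c l)))\<^sup>2)
         \<le> cmod (sandwich_form (\<lambda>x. complex_of_real (\<epsilon> * indicator S x))
                 (bump_combination J p k c) (bump_combination J p k c))"
proof -
  define A where "A = bessel_pot (real CARD('n) / 4) (bump_combination J p k c)"
  define LB where "LB i = (cmod (c i) * (real J * c1))\<^sup>2 / 2 - (Bf * I * (\<Sum>l\<le>k. cmod (c l)))\<^sup>2" for i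
  have "0 \<le> I" unfolding I_def by (intro sum_nonneg) auto
  have near: "cmod (c i) * (real J * c1) - Bf * I * (\<Sum>l\<le>k. cmod (c l)) \<le> cmod (A x)"
    "cmod (A x) \<le> (Bn * I + Bf * I) * (\<Sum>l\<le>k. cmod (c l))"
    if "i \<le> k" "x \<in> cball (p i) r" for i x
    using bessel_pot_bump_combination_near_center[OF sep(1) \<open>0 \<le> c1\<close> c1 Bn Bf(1) that(1), where x=x and c=c]
      that(2) r(2) unfolding A_def I_def by auto
  have "(1 / 2 :: real) ^ J \<le> 1" by (simp add: power_le_one)
  hence "disjoint_family_on (\<lambda>i. cball (p i) r) {..k}"
    using r(2) sep by (intro separated_cballs_disjoint[where R = R]) auto
  moreover have "integrable lebesgue (\<lambda>x. indicator S x * (cmod (A x))\<^sup>2)"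
  proof (rule integrable_indicator_bounded)
    show "emeasure lebesgue S < \<infinity>"
      using emeasure_bounded_finite[of S] by (auto simp: S_def)
    show "(\<lambda>x. (cmod (A x))\<^sup>2) \<in> borel_measurable lebesgue"
      unfolding A_def using bessel_pot_measurable[OF bump_combination_measurable] by measurable
    show "\<bar>(cmod (A x))\<^sup>2\<bar> \<le> ((Bn * I + Bf * I) * (\<Sum>l\<le>k. cmod (c l)))\<^sup>2" if "x \<in> S" for x
      using near(2) that by (auto simp: S_def intro!: power_mono)
  qed (simp add: S_def)
  moreover have "LB i \<le> (cmod (A x))\<^sup>2" if "i \<le> k" "x \<in> cball (p i) r" for i x
    unfolding LB_def using near(1)[OF that] \<open>0 \<le> c1\<close> \<open>0 \<le> I\<close> Bf(2)
    by (intro half_square_minus_square_le) (auto intro!: sum_nonneg mult_nonneg_nonneg)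
  ultimately have "(\<Sum>i\<le>k. measure lebesgue (cball (p i) r) * LB i) \<le> (\<integral>x. indicator S x * (cmod (A x))\<^sup>2 \<partial>lebesgue)"
    unfolding S_def using r(1)
    by (intro integral_indicator_disjoint_union_ge) (auto simp: emeasure_cball)
  moreover have "measure lebesgue (cball (p i) r) = unit_ball_vol (real CARD('n)) * r ^ CARD('n)" for i
    using r(1) by (simp add: content_cball)
  ultimately have "unit_ball_vol (real CARD('n)) * r ^ CARD('n) * (\<Sum>i\<le>k. LB i)
      \<le> (\<integral>x. indicator S x * (cmod (A x))\<^sup>2 \<partial>lebesgue)"
    by (simp add: sum_distrib_left)
  hence "\<epsilon> * (unit_ball_vol (real CARD('n)) * r ^ CARD('n) * (\<Sum>i\<le>k. LB i))
      \<le> \<epsilon> * (\<integral>x. indicator S x * (cmod (A x))\<^sup>2 \<partial>lebesgue)"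
    using \<open>0 \<le> \<epsilon>\<close> by (rule mult_left_mono)
  thus ?thesis
    unfolding sandwich_form_real_indicator A_def[symmetric] LB_def norm_of_real by (simp add: mult.assoc)
qed

lemma sandwich_weak_norm_separated_balls_ge:
  fixes p :: "nat \<Rightarrow> real^'n::finite" and k :: nat
  assumes "1 \<le> J" and sep: "\<And>i l. i \<noteq> l \<Longrightarrow> R \<le> dist (p i) (p l)" "2 \<le> R"
    and "0 \<le> c1" and c1: "\<And>q x::real^'n. dist q x \<le> (1 / 2) ^ J / 4 \<Longrightarrow>
           real J * c1 \<le> real_bessel_pot (real CARD('n) / 4) (dyadic_bump J q) x"
    and Bn: "\<And>z::real^'n. (1 / 2) ^ J / 4 \<le> norm z \<Longrightarrow> bessel_kernel (real CARD('n) / 4) z \<le> Bn"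
    and Bf: "\<And>z::real^'n. R - 1 \<le> norm z \<Longrightarrow> bessel_kernel (real CARD('n) / 4) z \<le> Bf" "0 \<le> Bf"
    and Bf_small: "Bf * (\<Sum>j\<in>{1..J}. sqrt (annulus_volume CARD('n) j)) \<le> real J * c1 / (2 * (real k + 1))"
    and r: "0 < r" "r \<le> (1 / 2) ^ J / 4" and "0 < \<epsilon>"
  shows "ennreal (\<epsilon> * (real (k + 1) * (unit_ball_vol (real CARD('n)) * r ^ CARD('n))) * (real J * (c1\<^sup>2 / 4)))
       \<le> sandwich_weak_norm (\<lambda>x. complex_of_real (\<epsilon> * indicator (\<Union>i\<le>k. cball (p i) r) x))"
proof -
  define m where "m = \<epsilon> * (unit_ball_vol (real CARD('n)) * r ^ CARD('n)) * (real J * c1\<^sup>2 / 4)"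
  have "ennreal (real (k + 1) * m)
      \<le> sandwich_weak_norm (\<lambda>x. complex_of_real (\<epsilon> * indicator (\<Union>i\<le>k. cball (p i) r) x))"
  proof (rule sandwich_weak_norm_ge)
    show "0 \<le> m" using \<open>0 < \<epsilon>\<close> r(1) by (simp add: m_def)
    fix u :: "nat \<Rightarrow> 'n fn"
    assume "\<forall>i<k. u i \<in> l2"
    then obtain c where c: "(\<Sum>i\<le>k. (cmod (c i))\<^sup>2) = 1 / real J"
      and orth: "\<forall>j<k. l2_inner (bump_combination J p k c) (u j) = 0"
      using obtain_orthogonal_bump_combination[OF \<open>1 \<le> J\<close>] by blast
    have "1 < dist (p i) (p l)" if "i \<noteq> l" for i l
      using sep that by force
    hence g: "bump_combination J p k c \<in> l2" "l2_norm (bump_combination J p k c) = 1"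
      using bump_combination_l2[where p = p and J = J and k = k and c = c] c \<open>1 \<le> J\<close> by auto
    have "m \<le> \<epsilon> * (unit_ball_vol (real CARD('n)) * r ^ CARD('n))
        * (\<Sum>i\<le>k. (cmod (c i) * (real J * c1))\<^sup>2 / 2
             - (Bf * (\<Sum>j\<in>{1..J}. sqrt (annulus_volume CARD('n) j)) * (\<Sum>l\<le>k. cmod (c l)))\<^sup>2)"
      unfolding m_def using \<open>0 < \<epsilon>\<close> r(1) Bf(2) Bf_small
      by (intro mult_left_mono sum_half_squares_minus_square_ge[OF \<open>1 \<le> J\<close> c])
        (auto intro!: mult_nonneg_nonneg sum_nonneg)
    also have "\<dots> \<le> cmod (sandwich_form (\<lambda>x. complex_of_real (\<epsilon> * indicator (\<Union>i\<le>k. cball (p i) r) x))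
                 (bump_combination J p k c) (bump_combination J p k c))"
      by (rule sandwich_form_bump_combination_ge[OF sep \<open>0 \<le> c1\<close> c1 Bn Bf r less_imp_le[OF \<open>0 < \<epsilon>\<close>]])
    finally show "\<exists>g\<in>l2. l2_norm g \<le> 1 \<and> (\<forall>i<k. l2_inner g (u i) = 0) \<and>
        m \<le> cmod (sandwich_form (\<lambda>x. complex_of_real (\<epsilon> * indicator (\<Union>i\<le>k. cball (p i) r) x)) g g)"
      using g orth by (intro bexI[of _ "bump_combination J p k c"]) auto
  qed
  thus ?thesis
    by (simp add: m_def mult_ac)
qed

text \<open>The separation \<open>R\<close> makes the interaction between the potentials of different bumps
  negligible.\<close>
lemma sandwich_weak_norm_separated_balls_ge_uniform:
  "\<exists>C>0. \<forall>J\<ge>1. \<forall>k. \<exists>R\<ge>2. \<forall>(p :: nat \<Rightarrow> real^'n::finite) r \<epsilon>.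
     0 < r \<longrightarrow> r \<le> (1 / 2) ^ J / 4 \<longrightarrow> 0 < \<epsilon> \<longrightarrow> (\<forall>i l. i \<noteq> l \<longrightarrow> R \<le> dist (p i) (p l)) \<longrightarrow>
     ennreal (\<epsilon> * (real (k + 1) * (unit_ball_vol (real CARD('n)) * r ^ CARD('n))) * (real J * C))
       \<le> sandwich_weak_norm (\<lambda>x. complex_of_real (\<epsilon> * indicator (\<Union>i\<le>k. cball (p i) r) x))"
proof -
  obtain c1 where "0 < c1" and c1: "\<And>J (q :: real^'n) x. 1 \<le> J \<Longrightarrow> dist q x \<le> (1 / 2) ^ J / 4 \<Longrightarrow>
      real J * c1 \<le> real_bessel_pot (real CARD('n) / 4) (dyadic_bump J q) x"
    using real_bessel_pot_dyadic_bump_ge by blast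
  have a: "0 < real CARD('n) / 4" "real CARD('n) / 4 < real CARD('n) / 2 + 1" by simp_all
  show ?thesis
  proof (rule exI[of _ "c1\<^sup>2 / 4"], intro conjI allI impI)
    fix J k :: nat
    assume "1 \<le> J"
    define I where "I = (\<Sum>j\<in>{1..J}. sqrt (annulus_volume CARD('n) j))"
    have "0 \<le> I" unfolding I_def by (intro sum_nonneg) auto
    define \<delta> where "\<delta> = real J * c1 / (2 * (real k + 1))"
    have "0 < \<delta>" using \<open>1 \<le> J\<close> \<open>0 < c1\<close> by (simp add: \<delta>_def)
    define Bf where "Bf = \<delta> / (I + 1)"
    have "0 < Bf" using \<open>0 < \<delta>\<close> \<open>0 \<le> I\<close> by (simp add: Bf_def)
    have "Bf * I = \<delta> * (I / (I + 1))" by (simp add: Bf_def)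
    also have "\<dots> \<le> \<delta>" by (rule mult_left_le) (use \<open>0 < \<delta>\<close> \<open>0 \<le> I\<close> in auto)
    finally have "Bf * I \<le> real J * c1 / (2 * (real k + 1))" by (simp add: \<delta>_def)
    obtain R0 where "0 < R0" and R0: "\<And>z::real^'n. R0 \<le> norm z \<Longrightarrow> bessel_kernel (real CARD('n) / 4) z \<le> Bf"
      using bessel_kernel_small_far[OF a \<open>0 < Bf\<close>] by blast
    obtain Bn where Bn: "\<And>z::real^'n. (1 / 2) ^ J / 4 \<le> norm z \<Longrightarrow> bessel_kernel (real CARD('n) / 4) z \<le> Bn"
      using bessel_kernel_bounded_away[OF a, of "(1 / 2) ^ J / 4"] by auto
    have Bf': "\<And>z::real^'n. R0 + 2 - 1 \<le> norm z \<Longrightarrow> bessel_kernel (real CARD('n) / 4) z \<le> Bf"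
      using R0 by force
    show "\<exists>R\<ge>2. \<forall>(p :: nat \<Rightarrow> real^'n) r \<epsilon>.
       0 < r \<longrightarrow> r \<le> (1 / 2) ^ J / 4 \<longrightarrow> 0 < \<epsilon> \<longrightarrow> (\<forall>i l. i \<noteq> l \<longrightarrow> R \<le> dist (p i) (p l)) \<longrightarrow>
       ennreal (\<epsilon> * (real (k + 1) * (unit_ball_vol (real CARD('n)) * r ^ CARD('n))) * (real J * (c1\<^sup>2 / 4)))
         \<le> sandwich_weak_norm (\<lambda>x. complex_of_real (\<epsilon> * indicator (\<Union>i\<le>k. cball (p i) r) x))"
    proof (rule exI[of _ "R0 + 2"], intro conjI allI impI)
      fix p :: "nat \<Rightarrow> real^'n" and r \<epsilon> :: real
      assume "0 < r" "r \<le> (1 / 2) ^ J / 4" "0 < \<epsilon>" "\<forall>i l. i \<noteq> l \<longrightarrow> R0 + 2 \<le> dist (p i) (p l)"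
      thus "ennreal (\<epsilon> * (real (k + 1) * (unit_ball_vol (real CARD('n)) * r ^ CARD('n))) * (real J * (c1\<^sup>2 / 4)))
          \<le> sandwich_weak_norm (\<lambda>x. complex_of_real (\<epsilon> * indicator (\<Union>i\<le>k. cball (p i) r) x))"
        using \<open>0 < R0\<close> \<open>0 < c1\<close> \<open>0 < Bf\<close> \<open>Bf * I \<le> real J * c1 / (2 * (real k + 1))\<close> unfolding I_def
        by (intro sandwich_weak_norm_separated_balls_ge[OF \<open>1 \<le> J\<close> _ _ _ c1[OF \<open>1 \<le> J\<close>] Bn Bf']) auto
    qed (use \<open>0 < R0\<close> in simp)
  qed (use \<open>0 < c1\<close> in simp)
qed

lemma exists_indicator_large_weak_norm_real:
  fixes \<epsilon> a K :: real
  assumes "0 < \<epsilon>" "0 < a"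
  shows "\<exists>S::(real^'n::finite) set. S \<in> sets lebesgue \<and> emeasure lebesgue S = ennreal a \<and>
     ennreal K < sandwich_weak_norm (\<lambda>x. complex_of_real (\<epsilon> * indicator S x))"
proof -
  define V where "V = unit_ball_vol (real CARD('n))"
  have "0 < V" by (simp add: V_def)
  obtain C where "0 < C" and C: "\<forall>J\<ge>1. \<forall>k. \<exists>R\<ge>2. \<forall>(p :: nat \<Rightarrow> real^'n) r \<epsilon>.
     0 < r \<longrightarrow> r \<le> (1 / 2) ^ J / 4 \<longrightarrow> 0 < \<epsilon> \<longrightarrow> (\<forall>i l. i \<noteq> l \<longrightarrow> R \<le> dist (p i) (p l)) \<longrightarrow>
     ennreal (\<epsilon> * (real (k + 1) * (V * r ^ CARD('n))) * (real J * C))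
       \<le> sandwich_weak_norm (\<lambda>x. complex_of_real (\<epsilon> * indicator (\<Union>i\<le>k. cball (p i) r) x))"
    using sandwich_weak_norm_separated_balls_ge_uniform unfolding V_def by blast
  obtain J :: nat where "1 \<le> J" "K < real J * (\<epsilon> * a * C)"
    using obtain_nat_mult_gt[of "\<epsilon> * a * C" K] assms \<open>0 < C\<close> by auto
  define \<rho> where "\<rho> = (1 / 2 :: real) ^ J / 4"
  have "0 < \<rho>" by (simp add: \<rho>_def)
  obtain k r where "0 < r" "r \<le> \<rho>" and vol: "real (k + 1) * (V * r ^ CARD('n)) = a"
    using obtain_balls_of_total_volume[OF assms(2) \<open>0 < V\<close> \<open>0 < \<rho>\<close> zero_less_card_finite] by blast
  obtain R where "2 \<le> R" and R: "\<forall>(p :: nat \<Rightarrow> real^'n) r \<epsilon>.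
     0 < r \<longrightarrow> r \<le> \<rho> \<longrightarrow> 0 < \<epsilon> \<longrightarrow> (\<forall>i l. i \<noteq> l \<longrightarrow> R \<le> dist (p i) (p l)) \<longrightarrow>
     ennreal (\<epsilon> * (real (k + 1) * (V * r ^ CARD('n))) * (real J * C))
       \<le> sandwich_weak_norm (\<lambda>x. complex_of_real (\<epsilon> * indicator (\<Union>i\<le>k. cball (p i) r) x))"
    using C \<open>1 \<le> J\<close> unfolding \<rho>_def by blast
  obtain p :: "nat \<Rightarrow> real^'n" where sep: "\<forall>i l. i \<noteq> l \<longrightarrow> R \<le> dist (p i) (p l)"
    using exists_separated_points[of R] \<open>2 \<le> R\<close> by auto
  have "2 * r < R"
    using \<open>r \<le> \<rho>\<close> \<open>2 \<le> R\<close> power_le_one[of "1 / 2 :: real" J] by (simp add: \<rho>_def)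
  show ?thesis
  proof (intro exI conjI)
    show "(\<Union>i\<le>k. cball (p i) r) \<in> sets lebesgue" by auto
    show "emeasure lebesgue (\<Union>i\<le>k. cball (p i) r) = ennreal a"
      using emeasure_separated_cballs[where p=p and R=R and r=r and k=k] sep \<open>2 * r < R\<close> \<open>0 < r\<close>
      unfolding V_def[symmetric] vol by auto
    have "ennreal K < ennreal (\<epsilon> * (real (k + 1) * (V * r ^ CARD('n))) * (real J * C))"
      unfolding vol using \<open>K < real J * (\<epsilon> * a * C)\<close> assms \<open>1 \<le> J\<close> \<open>0 < C\<close>
      by (intro ennreal_lessI) (auto simp: mult_ac)
    also have "\<dots> \<le> sandwich_weak_norm (\<lambda>x. complex_of_real (\<epsilon> * indicator (\<Union>i\<le>k. cball (p i) r) x))"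
      using R sep \<open>0 < r\<close> \<open>r \<le> \<rho>\<close> assms(1) by blast
    finally show "ennreal K < sandwich_weak_norm (\<lambda>x. complex_of_real (\<epsilon> * indicator (\<Union>i\<le>k. cball (p i) r) x))" .
  qed
qed

lemma exists_indicator_large_weak_norm:
  fixes \<epsilon> K :: real and a :: ennreal
  assumes "0 < \<epsilon>" "0 < a" "a < \<infinity>"
  shows "\<exists>S::(real^'n::finite) set. S \<in> sets lebesgue \<and> emeasure lebesgue S = a \<and>
     ennreal K < sandwich_weak_norm (\<lambda>x. complex_of_real (\<epsilon> * indicator S x))"
proof -
  obtain a' where "a = ennreal a'" "0 < a'"
    using assms(2,3) by (cases a) auto
  thus ?thesis
    using exists_indicator_large_weak_norm_real[OF assms(1) \<open>0 < a'\<close>, of K] by blast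
qed

section \<open>Symmetric function spaces\<close>

lemma scaled_indicator_S_space:
  fixes S :: "(real^'n::finite) set"
  assumes "S \<in> sets lebesgue" "emeasure lebesgue S < \<infinity>"
  shows "(\<lambda>x. complex_of_real (\<epsilon> * indicator S x)) \<in> S_space"
  unfolding S_space_def
proof (intro CollectI conjI exI[of _ "0::nat"])
  show "(\<lambda>x. complex_of_real (\<epsilon> * indicator S x)) \<in> borel_measurable lebesgue"
    using assms(1) by measurable
  have "emeasure lebesgue {x. real 0 < cmod (complex_of_real (\<epsilon> * indicator S x))} \<le> emeasure lebesgue S"
    using assms(1) by (intro emeasure_mono) (auto simp: indicator_def)
  thus "emeasure lebesgue {x. real 0 < cmod (complex_of_real (\<epsilon> * indicator S x))} < \<infinity>"
    using assms(2) by (rule order.strict_trans1)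
qed

lemma rearr_scaled_indicator_eq:
  fixes S T :: "(real^'n::finite) set"
  assumes "0 < \<epsilon>" "emeasure lebesgue S = emeasure lebesgue T"
  shows "rearr (\<lambda>x. complex_of_real (\<epsilon> * indicator S x)) t = rearr (\<lambda>x. complex_of_real (\<epsilon> * indicator T x)) t"
proof -
  have level: "{x. s < cmod (complex_of_real (\<epsilon> * indicator X x))} = (if s < 0 then UNIV else if s < \<epsilon> then X else {})"
    for s and X :: "(real^'n) set"
    using assms(1) by (auto simp: indicator_def)
  have "emeasure lebesgue {x. s < cmod (complex_of_real (\<epsilon> * indicator S x))}
      = emeasure lebesgue {x. s < cmod (complex_of_real (\<epsilon> * indicator T x))}" for s
    unfolding level using assms(2) by (cases "s < 0"; cases "s < \<epsilon>") (simp_all only: if_True if_False)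
  thus ?thesis
    unfolding rearr_def by (simp only:)
qed

lemma nonzero_subset_level_sets:
  fixes f :: "real^'n::finite \<Rightarrow> complex"
  shows "{x. f x \<noteq> 0} \<subseteq> (\<Union>n. {x. inverse (real (Suc n)) \<le> cmod (f x)} \<inter> cball 0 (real n))"
proof
  fix x
  assume "x \<in> {x. f x \<noteq> 0}"
  hence "0 < cmod (f x)" by simp
  obtain n1 :: nat where "inverse (cmod (f x)) < real n1" using reals_Archimedean2 by blast
  obtain n2 :: nat where "norm x < real n2" using reals_Archimedean2 by blast
  define n where "n = max n1 n2"
  have "inverse (cmod (f x)) \<le> real (Suc n)"
    using \<open>inverse (cmod (f x)) < real n1\<close> by (simp add: n_def)
  hence "inverse (real (Suc n)) \<le> cmod (f x)"
    using \<open>0 < cmod (f x)\<close> by (metis inverse_inverse_eq inverse_le_imp_le)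
  moreover have "x \<in> cball 0 (real n)"
    using \<open>norm x < real n2\<close> by (simp add: n_def)
  ultimately show "x \<in> (\<Union>n. {x. inverse (real (Suc n)) \<le> cmod (f x)} \<inter> cball 0 (real n))"
    by blast
qed

lemma obtain_level_set_positive_measure:
  fixes f :: "real^'n::finite \<Rightarrow> complex"
  assumes "f \<in> borel_measurable lebesgue" "\<not> (AE x in lebesgue. f x = 0)"
  obtains \<epsilon> A where "0 < \<epsilon>" "A \<in> sets lebesgue" "0 < emeasure lebesgue A" "emeasure lebesgue A < \<infinity>"
    "\<And>x. x \<in> A \<Longrightarrow> \<epsilon> \<le> cmod (f x)"
proof -
  define A where "A n = {x. inverse (real (Suc n)) \<le> cmod (f x)} \<inter> cball 0 (real n)" for n
  have A_sets: "A n \<in> sets lebesgue" for n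
  proof -
    have "{x \<in> space lebesgue. inverse (real (Suc n)) \<le> cmod (f x)} \<in> sets lebesgue"
      using assms(1) by measurable
    thus ?thesis unfolding A_def by (intro sets.Int) auto
  qed
  have "\<exists>n. A n \<notin> null_sets lebesgue"
    using assms(2) AE_I'[of "\<Union>n. A n" lebesgue "\<lambda>x. f x = 0"] nonzero_subset_level_sets[of f]
    unfolding A_def by auto
  then obtain n where "A n \<notin> null_sets lebesgue" by blast
  show ?thesis
  proof
    show "0 < inverse (real (Suc n))" by simp
    show "A n \<in> sets lebesgue" by (rule A_sets)
    show "0 < emeasure lebesgue (A n)"
      using \<open>A n \<notin> null_sets lebesgue\<close> A_sets by (simp add: null_sets_def zero_less_iff_neq_zero)
    have "emeasure lebesgue (A n) \<le> emeasure lebesgue (cball (0::real^'n) (real n))"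
      unfolding A_def by (rule emeasure_mono) auto
    also have "\<dots> < \<infinity>"
      by (simp add: emeasure_cball)
    finally show "emeasure lebesgue (A n) < \<infinity>" .
    show "\<And>x. x \<in> A n \<Longrightarrow> inverse (real (Suc n)) \<le> cmod (f x)"
      unfolding A_def by blast
  qed
qed

lemma sym_qBfsD:
  assumes "sym_qBfs E N"
  shows "E \<subseteq> S_space"
    and "\<And>f g. f \<in> E \<Longrightarrow> g \<in> S_space \<Longrightarrow> \<forall>x. cmod (g x) \<le> cmod (f x) \<Longrightarrow> g \<in> E"
    and "\<And>f g. f \<in> E \<Longrightarrow> g \<in> S_space \<Longrightarrow> \<forall>t>0. rearr g t = rearr f t \<Longrightarrow> g \<in> E \<and> N g = N f"
  using assms unfolding sym_qBfs_def by blast+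

lemma sym_qBfs_obtain_scaled_indicator:
  assumes "sym_qBfs E N" "f \<in> E" "\<not> (AE x in lebesgue. f x = 0)"
  obtains \<epsilon> A where "0 < \<epsilon>" "A \<in> sets lebesgue" "0 < emeasure lebesgue A" "emeasure lebesgue A < \<infinity>"
    "(\<lambda>x. complex_of_real (\<epsilon> * indicator A x)) \<in> E"
proof -
  have "f \<in> borel_measurable lebesgue"
    using sym_qBfsD(1)[OF assms(1)] assms(2) by (auto simp: S_space_def)
  then obtain \<epsilon> A where A: "0 < \<epsilon>" "A \<in> sets lebesgue" "0 < emeasure lebesgue A" "emeasure lebesgue A < \<infinity>"
    and le: "\<And>x. x \<in> A \<Longrightarrow> \<epsilon> \<le> cmod (f x)"
    using obtain_level_set_positive_measure[OF _ assms(3)] by blast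
  have "\<forall>x. cmod (complex_of_real (\<epsilon> * indicator A x)) \<le> cmod (f x)"
    using le \<open>0 < \<epsilon>\<close> by (auto simp: indicator_def)
  hence "(\<lambda>x. complex_of_real (\<epsilon> * indicator A x)) \<in> E"
    by (rule sym_qBfsD(2)[OF assms(1,2) scaled_indicator_S_space[OF A(2,4)]])
  with A show ?thesis by (intro that)
qed

lemma sym_qBfs_equimeasurable_scaled_indicator:
  fixes A S :: "(real^'n::finite) set"
  assumes "sym_qBfs E N" "0 < \<epsilon>" "(\<lambda>x. complex_of_real (\<epsilon> * indicator A x)) \<in> E"
    and "S \<in> sets lebesgue" "emeasure lebesgue S = emeasure lebesgue A" "emeasure lebesgue A < \<infinity>"
  shows "(\<lambda>x. complex_of_real (\<epsilon> * indicator S x)) \<in> E"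
    and "N (\<lambda>x. complex_of_real (\<epsilon> * indicator S x)) = N (\<lambda>x. complex_of_real (\<epsilon> * indicator A x))"
proof -
  have "(\<lambda>x. complex_of_real (\<epsilon> * indicator S x)) \<in> S_space"
    using assms(4-6) by (intro scaled_indicator_S_space) simp_all
  moreover have "\<forall>t>0. rearr (\<lambda>x. complex_of_real (\<epsilon> * indicator S x)) t
      = rearr (\<lambda>x. complex_of_real (\<epsilon> * indicator A x)) t"
    using rearr_scaled_indicator_eq[OF assms(2,5)] by blast
  ultimately show "(\<lambda>x. complex_of_real (\<epsilon> * indicator S x)) \<in> E"
    and "N (\<lambda>x. complex_of_real (\<epsilon> * indicator S x)) = N (\<lambda>x. complex_of_real (\<epsilon> * indicator A x))"
    using sym_qBfsD(3)[OF assms(1,3)] by blast+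
qed

theorem theorem1p2:
  fixes E :: "(real^'n::finite \<Rightarrow> complex) set" and N :: "('n fn) \<Rightarrow> real"
  assumes "sym_qBfs E N"
    and "\<exists>f\<in>E. \<not> (AE x in lebesgue. f x = 0)"
  shows "\<exists>f\<in>E. \<not> (sandwich_weak_norm f \<le> ennreal (N f))"
proof -
  obtain f where "f \<in> E" "\<not> (AE x in lebesgue. f x = 0)" using assms(2) by blast
  then obtain \<epsilon> A where "0 < \<epsilon>" "A \<in> sets lebesgue" "0 < emeasure lebesgue A" "emeasure lebesgue A < \<infinity>"
    and A: "(\<lambda>x. complex_of_real (\<epsilon> * indicator A x)) \<in> E"
    by (rule sym_qBfs_obtain_scaled_indicator[OF assms(1)])
  then obtain S :: "(real^'n) set" where S: "S \<in> sets lebesgue" "emeasure lebesgue S = emeasure lebesgue A"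
    and big: "ennreal (N (\<lambda>x. complex_of_real (\<epsilon> * indicator A x)))
                < sandwich_weak_norm (\<lambda>x. complex_of_real (\<epsilon> * indicator S x))"
    using exists_indicator_large_weak_norm[OF \<open>0 < \<epsilon>\<close>] by blast
  note equi = sym_qBfs_equimeasurable_scaled_indicator[OF assms(1) \<open>0 < \<epsilon>\<close> A S \<open>emeasure lebesgue A < \<infinity>\<close>]
  show ?thesis
    using big unfolding equi(2)[symmetric] not_le by (rule bexI[OF _ equi(1)])
qed

end
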